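(* Let $d\ge 2$, let $\mathbb{F}_q$ be a finite field of odd characteristic, and let $S_j=\{x\in\mathbb{F}_q^d : Q(x)=j\}$ with $j\in\mathbb{F}_q^*$ and $Q$ a non-degenerate quadratic form over $\mathbb{F}_q$. Then \[R^*(2\rightarrow 4)\lesssim 1.\]
   Context: $\chi$ is a fixed non-trivial additive character of $\mathbb{F}_q$. A quadratic form $Q(x)=\sum_{i,k=1}^d a_{ik}x_ix_k$ with $a_{ik}=a_{ki}\in\mathbb{F}_q$ is non-degenerate if the matrix $(a_{ik})$ is invertible. For $f:S_j\to\mathbb{C}$ and $m\in\mathbb{F}_q^d$, $\widehat{fd\sigma}(m)=\frac{1}{\#S_j}\sum_{x\in S_j}\chi(-x\cdot m)f(x)$. Norms: $\|g\|_{L^r(\mathbb{F}_q^d,dm)}=\big(\sum_{m\in\mathbb{F}_q^d}|g(m)|^r\big)^{1/r}$ and $\|f\|_{L^p(S_j,d\sigma)}=\big(\frac{1}{\#S_j}\sum_{x\in S_j}|f(x)|^p\big)^{1/p}$. $R^*(p\rightarrow r)$ denotes the best constant such that $\|\widehat{fd\sigma}\|_{L^r(\mathbb{F}_q^d,dm)}\le R^*(p\rightarrow r)\|f\|_{L^p(S_j,d\sigma)}$ for all $f:S_j\to\mathbb{C}$. $X\lesssim Y$ means $X\le CY$ for a constant $C$ independent of $q$. *)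

theory Defs
  imports Complex_Main "HOL-Algebra.Ring" "HOL-Library.FuncSet"
begin

text \<open>Finite fields are represented as HOL-Algebra rings with carrier contained in nat
  (every finite field is isomorphic to such a structure); this allows quantifying over all
  finite fields (of all sizes q) inside the statement.\<close>

definition vecs :: "nat ring \<Rightarrow> nat \<Rightarrow> (nat \<Rightarrow> nat) set" where
  "vecs R d = ({..<d} \<rightarrow>\<^sub>E carrier R)"

definition dotp :: "nat ring \<Rightarrow> nat \<Rightarrow> (nat \<Rightarrow> nat) \<Rightarrow> (nat \<Rightarrow> nat) \<Rightarrow> nat" where
  "dotp R d x m = finsum R (\<lambda>i. x i \<otimes>\<^bsub>R\<^esub> m i) {..<d}"

definition quad_form :: "nat ring \<Rightarrow> nat \<Rightarrow> (nat \<Rightarrow> nat \<Rightarrow> nat) \<Rightarrow> (nat \<Rightarrow> nat) \<Rightarrow> nat" where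
  "quad_form R d a x = finsum R (\<lambda>i. finsum R (\<lambda>k. a i k \<otimes>\<^bsub>R\<^esub> x i \<otimes>\<^bsub>R\<^esub> x k) {..<d}) {..<d}"

definition sym_coeffs :: "nat ring \<Rightarrow> nat \<Rightarrow> (nat \<Rightarrow> nat \<Rightarrow> nat) \<Rightarrow> bool" where
  "sym_coeffs R d a \<longleftrightarrow> (\<forall>i<d. \<forall>k<d. a i k \<in> carrier R \<and> a i k = a k i)"

definition mat_invertible :: "nat ring \<Rightarrow> nat \<Rightarrow> (nat \<Rightarrow> nat \<Rightarrow> nat) \<Rightarrow> bool" where
  "mat_invertible R d a \<longleftrightarrow> (\<exists>b. (\<forall>i<d. \<forall>k<d. b i k \<in> carrier R) \<and>
     (\<forall>i<d. \<forall>l<d. finsum R (\<lambda>k. a i k \<otimes>\<^bsub>R\<^esub> b k l) {..<d} = (if i = l then \<one>\<^bsub>R\<^esub> else \<zero>\<^bsub>R\<^esub>)) \<and>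
     (\<forall>i<d. \<forall>l<d. finsum R (\<lambda>k. b i k \<otimes>\<^bsub>R\<^esub> a k l) {..<d} = (if i = l then \<one>\<^bsub>R\<^esub> else \<zero>\<^bsub>R\<^esub>)))"

definition nontriv_add_char :: "nat ring \<Rightarrow> (nat \<Rightarrow> complex) \<Rightarrow> bool" where
  "nontriv_add_char R \<chi> \<longleftrightarrow>
     (\<forall>a\<in>carrier R. \<chi> a \<noteq> 0) \<and>
     (\<forall>a\<in>carrier R. \<forall>b\<in>carrier R. \<chi> (a \<oplus>\<^bsub>R\<^esub> b) = \<chi> a * \<chi> b) \<and>
     (\<exists>a\<in>carrier R. \<chi> a \<noteq> 1)"

definition sphere_set :: "nat ring \<Rightarrow> nat \<Rightarrow> (nat \<Rightarrow> nat \<Rightarrow> nat) \<Rightarrow> nat \<Rightarrow> (nat \<Rightarrow> nat) set" where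
  "sphere_set R d a j = {x \<in> vecs R d. quad_form R d a x = j}"

definition ext_op :: "nat ring \<Rightarrow> nat \<Rightarrow> (nat \<Rightarrow> complex) \<Rightarrow> (nat \<Rightarrow> nat) set
    \<Rightarrow> ((nat \<Rightarrow> nat) \<Rightarrow> complex) \<Rightarrow> (nat \<Rightarrow> nat) \<Rightarrow> complex" where
  "ext_op R d \<chi> S f m = (1 / of_nat (card S)) * (\<Sum>x\<in>S. \<chi> (\<ominus>\<^bsub>R\<^esub> dotp R d x m) * f x)"

definition norm_dm :: "nat ring \<Rightarrow> nat \<Rightarrow> real \<Rightarrow> ((nat \<Rightarrow> nat) \<Rightarrow> complex) \<Rightarrow> real" where
  "norm_dm R d r g = (\<Sum>m\<in>vecs R d. cmod (g m) powr r) powr (1 / r)"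

definition norm_dsigma :: "(nat \<Rightarrow> nat) set \<Rightarrow> real \<Rightarrow> ((nat \<Rightarrow> nat) \<Rightarrow> complex) \<Rightarrow> real" where
  "norm_dsigma S p f = ((1 / real (card S)) * (\<Sum>x\<in>S. cmod (f x) powr p)) powr (1 / p)"

definition R_star :: "nat ring \<Rightarrow> nat \<Rightarrow> (nat \<Rightarrow> complex) \<Rightarrow> (nat \<Rightarrow> nat) set \<Rightarrow> real \<Rightarrow> real \<Rightarrow> real" where
  "R_star R d \<chi> S p r = Inf {C. 0 \<le> C \<and> (\<forall>f. norm_dm R d r (ext_op R d \<chi> S f) \<le> C * norm_dsigma S p f)}"

end

theory Submission
  imports Defs "HOL-Algebra.Multiplicative_Group"
begin

(* Two facts about S = {Q = j} give the bound. First, S is large: expanding the indicator of Q = j in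
   additive characters leaves an error made of quadratic Gauss sums of modulus q^(d/2), and averaging
   over the substitutions t \<mapsto> t u\<^sup>2 turns the remaining phases into one-dimensional Gauss sums,
   so |S| \<ge> q^(d-1)/20. Second, S has small additive energy: for a \<noteq> 0 the points x \<in> S with a - x \<in> S
   lie on a hyperplane section of S, and that hyperplane splits into q^(d-2) parallel lines, none contained
   in S, each meeting S in at most two points, so there are at most 2 q^(d-2) of them. By Parseval,
   the fourth power of the L\<^sup>4 norm of the extension is q^d |S|^(-4) times the |f|-weighted additive
   energy of S, hence at most 3 q^(2d-2) |S|^(-2) \<le> 1200 times the fourth power of the L\<^sup>2(d\<sigma>) norm
   of f. *)

lemma sum_eq_0_if_shift_scales:
  fixes f :: "'a \<Rightarrow> 'b::field"
  assumes \<tau>: "bij_betw \<tau> A A" and scale: "\<And>x. x \<in> A \<Longrightarrow> f (\<tau> x) = z * f x" and "z \<noteq> 1"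
  shows "sum f A = 0"
proof -
  have "sum f A = (\<Sum>x\<in>A. f (\<tau> x))" using sum.reindex_bij_betw[OF \<tau>, of f] by simp
  also have "\<dots> = z * sum f A" by (simp add: scale sum_distrib_left)
  finally have "(z - 1) * sum f A = 0" by (simp add: algebra_simps)
  with \<open>z \<noteq> 1\<close> show ?thesis by simp
qed

lemma sum_pairs_le_by_row_count:
  fixes a :: "'a \<Rightarrow> real"
  assumes sym: "\<And>p p'. c p p' \<longleftrightarrow> c p' p"
    and rows: "\<And>p. p \<in> P \<Longrightarrow> real (card {p' \<in> P. c p p'}) \<le> M"
    and "finite P"
  shows "(\<Sum>p\<in>P. \<Sum>p'\<in>P. if c p p' then a p * a p' else 0) \<le> M * (\<Sum>p\<in>P. (a p)\<^sup>2)"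
proof -
  let ?half = "\<lambda>p p'. if c p p' then (a p)\<^sup>2 / 2 else 0"
  have pointwise: "(if c p p' then a p * a p' else 0) \<le> ?half p p' + ?half p' p" for p p'
    using sum_squares_bound[of "a p" "a p'"] sym[of p p'] by (simp add: field_simps)
  have "(\<Sum>p\<in>P. \<Sum>p'\<in>P. if c p p' then a p * a p' else 0)
      \<le> (\<Sum>p\<in>P. \<Sum>p'\<in>P. ?half p p' + ?half p' p)"
    by (intro sum_mono pointwise)
  also have "\<dots> = 2 * (\<Sum>p\<in>P. \<Sum>p'\<in>P. ?half p p')"
    by (simp add: sum.distrib sum.swap[of "\<lambda>p p'. ?half p' p"])
  also have "\<dots> = (\<Sum>p\<in>P. (a p)\<^sup>2 * real (card {p' \<in> P. c p p'}))"
    using \<open>finite P\<close> by (simp add: sum.If_cases Int_def sum_distrib_left mult.commute)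
  also have "\<dots> \<le> (\<Sum>p\<in>P. (a p)\<^sup>2 * M)"
    using rows by (intro sum_mono mult_left_mono) auto
  finally show ?thesis by (simp add: sum_distrib_left mult.commute)
qed

lemma powr_quarter_le:
  fixes x y :: real
  assumes "0 \<le> x" "0 \<le> y" "x \<le> y ^ 4"
  shows "x powr (1 / 4) \<le> y"
proof -
  have "x powr (1 / 4) \<le> (y ^ 4) powr (1 / 4)" using assms by (intro powr_mono2) auto
  also have "\<dots> = (y powr 4) powr (1 / 4)" using powr_realpow'[of y 4] assms(2) by simp
  also have "\<dots> = y powr (4 * (1 / 4))" by (rule powr_powr)
  also have "\<dots> = y" using assms(2) by simp
  finally show ?thesis .
qed

lemma (in abelian_monoid) finsum_swap:
  assumes "finite I" "finite J" "\<And>i k. i \<in> I \<Longrightarrow> k \<in> J \<Longrightarrow> f i k \<in> carrier G"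
  shows "(\<Oplus>i\<in>I. \<Oplus>k\<in>J. f i k) = (\<Oplus>k\<in>J. \<Oplus>i\<in>I. f i k)"
  using assms
proof (induction I rule: finite_induct)
  case (insert x F)
  have "(\<Oplus>i\<in>insert x F. \<Oplus>k\<in>J. f i k) = (\<Oplus>k\<in>J. f x k) \<oplus> (\<Oplus>k\<in>J. \<Oplus>i\<in>F. f i k)"
    using insert by (subst finsum_insert) (auto intro!: finsum_closed)
  also have "\<dots> = (\<Oplus>k\<in>J. f x k \<oplus> (\<Oplus>i\<in>F. f i k))"
    using insert by (intro finsum_addf[symmetric]) (auto intro!: finsum_closed)
  also have "\<dots> = (\<Oplus>k\<in>J. \<Oplus>i\<in>insert x F. f i k)"
    using insert by (intro finsum_cong) (auto intro!: finsum_closed simp: finsum_insert)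
  finally show ?case .
qed simp

lemma (in field) nonzero_inverse:
  assumes "a \<in> carrier R" "a \<noteq> \<zero>"
  shows "inv a \<in> carrier R" "inv a \<noteq> \<zero>" "inv a \<otimes> a = \<one>" "a \<otimes> inv a = \<one>" "inv (inv a) = a"
proof -
  have "a \<in> Units R" using assms field_Units by blast
  then show "inv a \<in> carrier R" "inv a \<otimes> a = \<one>" "a \<otimes> inv a = \<one>" "inv (inv a) = a" by auto
  then show "inv a \<noteq> \<zero>" using assms by auto
qed

lemma (in field) quadratic_roots_subset:
  assumes abc: "\<alpha> \<in> carrier R" "\<beta> \<in> carrier R" "\<gamma> \<in> carrier R" and "\<alpha> \<noteq> \<zero>"
    and t1: "t1 \<in> carrier R" "\<alpha> \<otimes> t1 \<otimes> t1 \<oplus> \<beta> \<otimes> t1 \<oplus> \<gamma> = \<zero>"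
  shows "{t \<in> carrier R. \<alpha> \<otimes> t \<otimes> t \<oplus> \<beta> \<otimes> t \<oplus> \<gamma> = \<zero>} \<subseteq> {t1, inv \<alpha> \<otimes> \<ominus> \<beta> \<ominus> t1}"
proof
  fix t assume "t \<in> {t \<in> carrier R. \<alpha> \<otimes> t \<otimes> t \<oplus> \<beta> \<otimes> t \<oplus> \<gamma> = \<zero>}"
  then have t: "t \<in> carrier R" "\<alpha> \<otimes> t \<otimes> t \<oplus> \<beta> \<otimes> t \<oplus> \<gamma> = \<zero>" by auto
  note inv\<alpha> = nonzero_inverse[OF abc(1) \<open>\<alpha> \<noteq> \<zero>\<close>]
  have "(t \<ominus> t1) \<otimes> (\<alpha> \<otimes> (t \<oplus> t1) \<oplus> \<beta>) =
        (\<alpha> \<otimes> t \<otimes> t \<oplus> \<beta> \<otimes> t \<oplus> \<gamma>) \<ominus> (\<alpha> \<otimes> t1 \<otimes> t1 \<oplus> \<beta> \<otimes> t1 \<oplus> \<gamma>)"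
    using t(1) t1(1) abc by algebra
  also have "\<dots> = \<zero>" by (simp only: t(2) t1(2)) (simp add: a_minus_def)
  finally consider "t = t1" | "\<alpha> \<otimes> (t \<oplus> t1) = \<ominus> \<beta>"
    using t(1) t1(1) abc by (auto simp: integral_iff sum_zero_eq_neg)
  then show "t \<in> {t1, inv \<alpha> \<otimes> \<ominus> \<beta> \<ominus> t1}"
  proof cases
    case 2
    have "t \<oplus> t1 = inv \<alpha> \<otimes> (\<alpha> \<otimes> (t \<oplus> t1))"
      using t(1) t1(1) abc inv\<alpha> by (simp add: m_assoc[symmetric])
    then have "inv \<alpha> \<otimes> \<ominus> \<beta> = t \<oplus> t1" using 2 by simp
    then show ?thesis using t(1) t1(1) by (simp add: a_minus_def a_assoc r_neg)
  qed simp
qed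

lemma (in field) card_quadratic_roots_le_2:
  assumes abc: "\<alpha> \<in> carrier R" "\<beta> \<in> carrier R" "\<gamma> \<in> carrier R"
    and nontrivial: "\<not> (\<alpha> = \<zero> \<and> \<beta> = \<zero> \<and> \<gamma> = \<zero>)"
  shows "card {t \<in> carrier R. \<alpha> \<otimes> t \<otimes> t \<oplus> \<beta> \<otimes> t \<oplus> \<gamma> = \<zero>} \<le> 2"
proof -
  let ?Z = "{t \<in> carrier R. \<alpha> \<otimes> t \<otimes> t \<oplus> \<beta> \<otimes> t \<oplus> \<gamma> = \<zero>}"
  have degenerate: "?Z = {}" if "\<alpha> = \<zero>" "\<beta> = \<zero>"
    using that nontrivial abc by auto
  consider (empty) "?Z = {}" | (quadratic) t1 where "t1 \<in> ?Z" "\<alpha> \<noteq> \<zero>" | (linear) "\<alpha> = \<zero>" "\<beta> \<noteq> \<zero>"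
    using degenerate by blast
  then show ?thesis
  proof cases
    case quadratic
    then have "card ?Z \<le> card {t1, inv \<alpha> \<otimes> \<ominus> \<beta> \<ominus> t1}"
      using abc by (intro card_mono quadratic_roots_subset) auto
    also have "\<dots> \<le> 2" by (simp add: card_insert_if)
    finally show ?thesis .
  next
    case linear
    note inv\<beta> = nonzero_inverse[OF abc(2) linear(2)]
    have "?Z \<subseteq> {inv \<beta> \<otimes> \<ominus> \<gamma>}"
    proof
      fix t assume "t \<in> ?Z"
      then have t: "\<beta> \<otimes> t \<oplus> \<gamma> = \<zero>" "t \<in> carrier R" using linear abc by auto
      then have "\<beta> \<otimes> t = \<ominus> \<gamma>" using abc by (simp add: sum_zero_eq_neg)
      moreover have "t = inv \<beta> \<otimes> (\<beta> \<otimes> t)" using t abc inv\<beta> by (simp add: m_assoc[symmetric])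
      ultimately show "t \<in> {inv \<beta> \<otimes> \<ominus> \<gamma>}" by simp
    qed
    then have "card ?Z \<le> card {inv \<beta> \<otimes> \<ominus> \<gamma>}" by (intro card_mono) auto
    then show ?thesis by simp
  qed (simp only: card.empty)
qed

lemma (in field) card_carrier_ge_3:
  assumes "finite (carrier R)" and "\<one> \<oplus> \<one> \<noteq> \<zero>"
  shows "3 \<le> card (carrier R)"
proof -
  have "\<one> \<oplus> \<one> \<noteq> \<one>" using add.r_cancel_one'[of \<one> \<one>] by auto
  then have "card {\<zero>, \<one>, \<one> \<oplus> \<one>} = 3" using assms(2) by (auto simp: card_insert_if)
  moreover have "{\<zero>, \<one>, \<one> \<oplus> \<one>} \<subseteq> carrier R" by auto
  ultimately show ?thesis by (metis card_mono assms(1))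
qed

section \<open>Additive characters of a finite field\<close>

locale fq_char = field R for R :: "nat ring" (structure) +
  fixes \<chi> :: "nat \<Rightarrow> complex"
  assumes finite_carrier: "finite (carrier R)" and character: "nontriv_add_char R \<chi>"
begin

abbreviation q where "q \<equiv> card (carrier R)"

lemma chi_nonzero: "x \<in> carrier R \<Longrightarrow> \<chi> x \<noteq> 0"
  and chi_add: "x \<in> carrier R \<Longrightarrow> y \<in> carrier R \<Longrightarrow> \<chi> (x \<oplus> y) = \<chi> x * \<chi> y"
  and chi_nontrivial: "\<exists>b\<in>carrier R. \<chi> b \<noteq> 1"
  using character unfolding nontriv_add_char_def by blast+

lemma chi_zero [simp]: "\<chi> \<zero> = 1"
  using chi_add[of \<zero> \<zero>] chi_nonzero[of \<zero>] by simp

lemma chi_minus: "x \<in> carrier R \<Longrightarrow> \<chi> (\<ominus> x) * \<chi> x = 1"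
  using chi_add[of "\<ominus> x" x] by (simp add: l_neg)

(* Translating the sum of the |\<chi> t| by x multiplies it by |\<chi> x|, and the sum is positive. *)
lemma norm_chi: assumes x: "x \<in> carrier R" shows "cmod (\<chi> x) = 1"
proof -
  let ?T = "\<Sum>t\<in>carrier R. cmod (\<chi> t)"
  have shift: "bij_betw (\<lambda>t. t \<oplus> x) (carrier R) (carrier R)"
    by (rule bij_betwI[where g="\<lambda>t. t \<ominus> x"]) (auto simp: x a_minus_def a_assoc l_neg r_neg)
  have "?T = (\<Sum>t\<in>carrier R. cmod (\<chi> (t \<oplus> x)))"
    using sum.reindex_bij_betw[OF shift, of "\<lambda>t. cmod (\<chi> t)"] by simp
  also have "\<dots> = ?T * cmod (\<chi> x)" by (simp add: chi_add x norm_mult sum_distrib_right)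
  finally have "?T * (1 - cmod (\<chi> x)) = 0" by (simp add: algebra_simps)
  moreover have "?T \<ge> cmod (\<chi> \<zero>)" by (rule member_le_sum) (auto simp: finite_carrier)
  ultimately show ?thesis by simp
qed

lemma cnj_chi: "x \<in> carrier R \<Longrightarrow> cnj (\<chi> x) = \<chi> (\<ominus> x)"
  using chi_minus[of x] chi_nonzero[of x] complex_norm_square[of "\<chi> x"]
  by (simp add: norm_chi) (metis mult.commute mult_cancel_right)

lemma sum_chi: "(\<Sum>t\<in>carrier R. \<chi> t) = 0"
proof -
  obtain b where b: "b \<in> carrier R" "\<chi> b \<noteq> 1" using chi_nontrivial by blast
  have "bij_betw (\<lambda>t. t \<oplus> b) (carrier R) (carrier R)"
    by (rule bij_betwI[where g="\<lambda>t. t \<ominus> b"]) (auto simp: b a_minus_def a_assoc l_neg r_neg)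
  then show ?thesis by (rule sum_eq_0_if_shift_scales[where z="\<chi> b"]) (simp_all add: b chi_add mult.commute)
qed

lemma sum_chi_mult:
  assumes c: "c \<in> carrier R"
  shows "(\<Sum>t\<in>carrier R. \<chi> (c \<otimes> t)) = (if c = \<zero> then of_nat q else 0)"
proof (cases "c = \<zero>")
  case False
  note invc = nonzero_inverse[OF c False]
  have "bij_betw (\<lambda>t. c \<otimes> t) (carrier R) (carrier R)"
    by (rule bij_betwI[where g="\<lambda>t. inv c \<otimes> t"]) (auto simp: c invc m_assoc[symmetric])
  then show ?thesis using False sum_chi sum.reindex_bij_betw[of "\<lambda>t. c \<otimes> t" _ _ \<chi>] by simp
qed simp

definition scalar_gauss_sum where "scalar_gauss_sum c = (\<Sum>v\<in>carrier R. \<chi> (c \<otimes> v \<otimes> v))"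

lemma scalar_gauss_sum_mult_cnj:
  assumes c: "c \<in> carrier R" "c \<noteq> \<zero>" and two: "\<one> \<oplus> \<one> \<noteq> \<zero>"
  shows "scalar_gauss_sum c * cnj (scalar_gauss_sum c) = of_nat q"
proof -
  define e where "e = c \<otimes> (\<one> \<oplus> \<one>)"
  have e: "e \<in> carrier R" "e \<noteq> \<zero>" using c two by (auto simp: e_def integral_iff)
  have expand: "c \<otimes> (w \<oplus> h) \<otimes> (w \<oplus> h) \<oplus> \<ominus> (c \<otimes> w \<otimes> w) = c \<otimes> h \<otimes> h \<oplus> e \<otimes> h \<otimes> w"
    if "w \<in> carrier R" "h \<in> carrier R" for w h
    using that c unfolding e_def by algebra
  have shift: "bij_betw (\<lambda>h. w \<oplus> h) (carrier R) (carrier R)" if "w \<in> carrier R" for w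
    by (rule bij_betwI[where g="\<lambda>v. \<ominus> w \<oplus> v"]) (use that in \<open>auto simp: a_assoc[symmetric] l_neg r_neg\<close>)
  have "scalar_gauss_sum c * cnj (scalar_gauss_sum c)
      = (\<Sum>v\<in>carrier R. \<Sum>w\<in>carrier R. \<chi> (c \<otimes> v \<otimes> v) * \<chi> (\<ominus> (c \<otimes> w \<otimes> w)))"
    by (simp add: scalar_gauss_sum_def cnj_sum sum_product cnj_chi c)
  also have "\<dots> = (\<Sum>w\<in>carrier R. \<Sum>v\<in>carrier R. \<chi> (c \<otimes> v \<otimes> v) * \<chi> (\<ominus> (c \<otimes> w \<otimes> w)))"
    by (rule sum.swap)
  also have "\<dots> = (\<Sum>w\<in>carrier R. \<Sum>h\<in>carrier R. \<chi> (c \<otimes> h \<otimes> h) * \<chi> (e \<otimes> h \<otimes> w))"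
  proof (rule sum.cong[OF refl])
    fix w assume w: "w \<in> carrier R"
    have "(\<Sum>v\<in>carrier R. \<chi> (c \<otimes> v \<otimes> v) * \<chi> (\<ominus> (c \<otimes> w \<otimes> w)))
        = (\<Sum>h\<in>carrier R. \<chi> (c \<otimes> (w \<oplus> h) \<otimes> (w \<oplus> h)) * \<chi> (\<ominus> (c \<otimes> w \<otimes> w)))"
      using sum.reindex_bij_betw[OF shift[OF w], of "\<lambda>v. \<chi> (c \<otimes> v \<otimes> v) * \<chi> (\<ominus> (c \<otimes> w \<otimes> w))"] by simp
    also have "\<dots> = (\<Sum>h\<in>carrier R. \<chi> (c \<otimes> h \<otimes> h) * \<chi> (e \<otimes> h \<otimes> w))"
      using w c e by (intro sum.cong refl) (simp add: chi_add[symmetric] expand)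
    finally show "(\<Sum>v\<in>carrier R. \<chi> (c \<otimes> v \<otimes> v) * \<chi> (\<ominus> (c \<otimes> w \<otimes> w)))
        = (\<Sum>h\<in>carrier R. \<chi> (c \<otimes> h \<otimes> h) * \<chi> (e \<otimes> h \<otimes> w))" .
  qed
  also have "\<dots> = (\<Sum>h\<in>carrier R. \<chi> (c \<otimes> h \<otimes> h) * (\<Sum>w\<in>carrier R. \<chi> (e \<otimes> h \<otimes> w)))"
    by (subst sum.swap) (simp add: sum_distrib_left)
  also have "\<dots> = (\<Sum>h\<in>carrier R. if h = \<zero> then of_nat q else 0)"
    using c e by (intro sum.cong refl) (simp add: sum_chi_mult integral_iff)
  also have "\<dots> = of_nat q" by (simp add: finite_carrier)
  finally show ?thesis .
qed

lemma sum_chi_inverse_squares: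
  assumes "c \<in> carrier R"
  shows "(\<Sum>u\<in>carrier R - {\<zero>}. \<chi> (c \<otimes> inv u \<otimes> inv u)) = scalar_gauss_sum c - 1"
proof -
  have "bij_betw (\<lambda>u. inv u) (carrier R - {\<zero>}) (carrier R - {\<zero>})"
    by (rule bij_betwI[where g="\<lambda>u. inv u"]) (auto simp: nonzero_inverse)
  then have "(\<Sum>u\<in>carrier R - {\<zero>}. \<chi> (c \<otimes> inv u \<otimes> inv u)) = (\<Sum>v\<in>carrier R - {\<zero>}. \<chi> (c \<otimes> v \<otimes> v))"
    using sum.reindex_bij_betw[of "\<lambda>u. inv u" _ _ "\<lambda>v. \<chi> (c \<otimes> v \<otimes> v)"] by simp
  also have "\<dots> = scalar_gauss_sum c - 1"
    unfolding scalar_gauss_sum_def using assms by (subst sum.remove[of _ \<zero>]) (auto simp: finite_carrier)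
  finally show ?thesis .
qed

lemma norm_scalar_gauss_sum:
  "c \<in> carrier R \<Longrightarrow> c \<noteq> \<zero> \<Longrightarrow> \<one> \<oplus> \<one> \<noteq> \<zero> \<Longrightarrow> cmod (scalar_gauss_sum c) = sqrt (real q)"
  by (simp add: complex_mod_sqrt_Re_mult_cnj scalar_gauss_sum_mult_cnj)

end

section \<open>Vectors over a finite field\<close>

locale fq_space = fq_char + fixes d :: nat
begin

abbreviation V where "V \<equiv> vecs R d"
abbreviation dot where "dot \<equiv> dotp R d"

definition vzero where "vzero = (\<lambda>i\<in>{..<d}. \<zero>)"
definition vadd where "vadd x y = (\<lambda>i\<in>{..<d}. x i \<oplus> y i)"
definition vscale where "vscale c x = (\<lambda>i\<in>{..<d}. c \<otimes> x i)"
definition vneg where "vneg x = (\<lambda>i\<in>{..<d}. \<ominus> x i)"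
definition unit_vec where "unit_vec k = (\<lambda>i\<in>{..<d}. if i = k then \<one> else \<zero>)"

lemma vecs_iff: "x \<in> V \<longleftrightarrow> (\<forall>i<d. x i \<in> carrier R) \<and> (\<forall>i. \<not> i < d \<longrightarrow> x i = undefined)"
  by (auto simp: vecs_def PiE_iff extensional_def)

lemma vec_closed [simp]: "x \<in> V \<Longrightarrow> i < d \<Longrightarrow> x i \<in> carrier R"
  by (simp add: vecs_iff)

lemma vec_eq_iff: "x \<in> V \<Longrightarrow> y \<in> V \<Longrightarrow> x = y \<longleftrightarrow> (\<forall>i<d. x i = y i)"
  by (metis vecs_iff ext)

lemma vec_eqI: "x \<in> V \<Longrightarrow> y \<in> V \<Longrightarrow> (\<And>i. i < d \<Longrightarrow> x i = y i) \<Longrightarrow> x = y"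
  by (simp add: vec_eq_iff)

lemma finite_vecs: "finite V"
  by (simp add: vecs_def finite_carrier finite_PiE)

lemma card_vecs: "card V = q ^ d"
  by (simp add: vecs_def card_PiE)

lemma vzero_vec [simp]: "vzero \<in> V"
  and vadd_vec [simp]: "x \<in> V \<Longrightarrow> y \<in> V \<Longrightarrow> vadd x y \<in> V"
  and vscale_vec [simp]: "c \<in> carrier R \<Longrightarrow> x \<in> V \<Longrightarrow> vscale c x \<in> V"
  and vneg_vec [simp]: "x \<in> V \<Longrightarrow> vneg x \<in> V"
  and unit_vec_vec [simp]: "unit_vec k \<in> V"
  by (simp_all add: vecs_def vzero_def vadd_def vscale_def vneg_def unit_vec_def PiE_iff)

lemma vzero_apply [simp]: "i < d \<Longrightarrow> vzero i = \<zero>"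
  and vadd_apply [simp]: "i < d \<Longrightarrow> vadd x y i = x i \<oplus> y i"
  and vscale_apply [simp]: "i < d \<Longrightarrow> vscale c x i = c \<otimes> x i"
  and vneg_apply [simp]: "i < d \<Longrightarrow> vneg x i = \<ominus> x i"
  by (simp_all add: vzero_def vadd_def vscale_def vneg_def)

lemma unit_vec_apply [simp]: "i < d \<Longrightarrow> unit_vec k i = (if i = k then \<one> else \<zero>)"
  by (simp add: unit_vec_def)

lemma vneg_eq_vscale: "x \<in> V \<Longrightarrow> vneg x = vscale (\<ominus> \<one>) x"
  by (rule vec_eqI) (simp_all add: l_minus)

lemma vneg_vneg [simp]: "x \<in> V \<Longrightarrow> vneg (vneg x) = x"
  by (rule vec_eqI) (simp_all add: minus_minus)

lemma vadd_eq_iff: "x \<in> V \<Longrightarrow> y \<in> V \<Longrightarrow> a \<in> V \<Longrightarrow> vadd x y = a \<longleftrightarrow> y = vadd a (vneg x)"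
  by (auto simp: vec_eq_iff a_comm[of _ "\<ominus> _"] add.inv_solve_left)

lemma vadd_eq_vzero_iff: "x \<in> V \<Longrightarrow> y \<in> V \<Longrightarrow> vadd x y = vzero \<longleftrightarrow> y = vneg x"
  using vadd_eq_iff[of x y vzero] by (simp add: vec_eq_iff)

lemma vsub_eq_vzero_iff: "x \<in> V \<Longrightarrow> y \<in> V \<Longrightarrow> vadd x (vneg y) = vzero \<longleftrightarrow> x = y"
  by (simp add: vec_eq_iff flip: a_minus_def)

lemma bij_betw_vadd: "a \<in> V \<Longrightarrow> bij_betw (vadd a) V V"
  by (rule bij_betwI[where g="vadd (vneg a)"]) (simp_all add: vec_eq_iff a_assoc[symmetric] l_neg r_neg)

lemma vscale_vscale: "a \<in> carrier R \<Longrightarrow> b \<in> carrier R \<Longrightarrow> x \<in> V \<Longrightarrow> vscale a (vscale b x) = vscale (a \<otimes> b) x"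
  by (rule vec_eqI) (simp_all add: m_assoc)

lemma vscale_one [simp]: "x \<in> V \<Longrightarrow> vscale \<one> x = x"
  by (rule vec_eqI) simp_all

lemma vscale_zero_left [simp]: "x \<in> V \<Longrightarrow> vscale \<zero> x = vzero"
  by (rule vec_eqI) simp_all

lemma vscale_eq_vzero_iff:
  assumes "a \<in> carrier R" "a \<noteq> \<zero>" "x \<in> V"
  shows "vscale a x = vzero \<longleftrightarrow> x = vzero"
  using assms by (auto simp: vec_eq_iff integral_iff)

lemma vec_nonzero_component: "x \<in> V \<Longrightarrow> x \<noteq> vzero \<Longrightarrow> \<exists>i<d. x i \<noteq> \<zero>"
  by (auto simp: vec_eq_iff)

lemma dot_closed [simp]: "x \<in> V \<Longrightarrow> y \<in> V \<Longrightarrow> dot x y \<in> carrier R"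
  by (auto simp: dotp_def intro!: finsum_closed)

lemma dot_comm: "x \<in> V \<Longrightarrow> y \<in> V \<Longrightarrow> dot x y = dot y x"
  unfolding dotp_def by (intro finsum_cong) (auto simp: m_comm)

lemma dot_vadd_left: "x \<in> V \<Longrightarrow> y \<in> V \<Longrightarrow> m \<in> V \<Longrightarrow> dot (vadd x y) m = dot x m \<oplus> dot y m"
proof -
  assume "x \<in> V" "y \<in> V" "m \<in> V"
  then have "dot (vadd x y) m = (\<Oplus>i\<in>{..<d}. x i \<otimes> m i \<oplus> y i \<otimes> m i)"
    unfolding dotp_def by (intro finsum_cong) (auto simp: l_distr)
  also have "\<dots> = dot x m \<oplus> dot y m"
    unfolding dotp_def using \<open>x \<in> V\<close> \<open>y \<in> V\<close> \<open>m \<in> V\<close> by (intro finsum_addf) auto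
  finally show ?thesis .
qed

lemma dot_vscale_left: "c \<in> carrier R \<Longrightarrow> x \<in> V \<Longrightarrow> m \<in> V \<Longrightarrow> dot (vscale c x) m = c \<otimes> dot x m"
proof -
  assume "c \<in> carrier R" "x \<in> V" "m \<in> V"
  then have "dot (vscale c x) m = (\<Oplus>i\<in>{..<d}. c \<otimes> (x i \<otimes> m i))"
    unfolding dotp_def by (intro finsum_cong) (auto simp: m_assoc)
  also have "\<dots> = c \<otimes> dot x m"
    unfolding dotp_def using \<open>c \<in> carrier R\<close> \<open>x \<in> V\<close> \<open>m \<in> V\<close> by (intro finsum_rdistr[symmetric]) auto
  finally show ?thesis .
qed

lemma dot_vzero_left [simp]: "m \<in> V \<Longrightarrow> dot vzero m = \<zero>"
  unfolding dotp_def by (simp add: finsum_zero cong: finsum_cong)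

lemma dot_vneg_left: "x \<in> V \<Longrightarrow> m \<in> V \<Longrightarrow> dot (vneg x) m = \<ominus> dot x m"
  by (simp add: vneg_eq_vscale dot_vscale_left l_minus)

lemma dot_vadd_right: "x \<in> V \<Longrightarrow> y \<in> V \<Longrightarrow> m \<in> V \<Longrightarrow> dot m (vadd x y) = dot m x \<oplus> dot m y"
  by (simp add: dot_comm[of m] dot_vadd_left)

lemma dot_vscale_right: "c \<in> carrier R \<Longrightarrow> x \<in> V \<Longrightarrow> m \<in> V \<Longrightarrow> dot m (vscale c x) = c \<otimes> dot m x"
  by (simp add: dot_comm[of m] dot_vscale_left)

lemma dot_vneg_right: "x \<in> V \<Longrightarrow> m \<in> V \<Longrightarrow> dot m (vneg x) = \<ominus> dot m x"
  by (simp add: dot_comm[of m] dot_vneg_left)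

lemma dot_vzero_right [simp]: "m \<in> V \<Longrightarrow> dot m vzero = \<zero>"
  using dot_comm[of m vzero] by simp

lemma dot_single_support:
  assumes "u \<in> V" "c \<in> V" "r < d" and "\<And>i. i < d \<Longrightarrow> i \<noteq> r \<Longrightarrow> u i = \<zero>"
  shows "dot u c = u r \<otimes> c r"
proof -
  have "dot u c = (\<Oplus>i\<in>{..<d}. if r = i then u i \<otimes> c i else \<zero>)"
    unfolding dotp_def using assms by (intro finsum_cong') auto
  also have "\<dots> = u r \<otimes> c r" using assms by (intro finsum_singleton) auto
  finally show ?thesis .
qed

lemma dot_unit_vec: "m \<in> V \<Longrightarrow> i < d \<Longrightarrow> dot (unit_vec i) m = m i"
  by (subst dot_single_support[of _ _ i]) auto

lemma sum_chi_dot: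
  assumes v: "v \<in> V"
  shows "(\<Sum>m\<in>V. \<chi> (dot m v)) = (if v = vzero then of_nat (q ^ d) else 0)"
proof (cases "v = vzero")
  case False
  obtain i where i: "i < d" "v i \<noteq> \<zero>" using vec_nonzero_component[OF v False] by blast
  obtain b where b: "b \<in> carrier R" "\<chi> b \<noteq> 1" using chi_nontrivial by blast
  note inv_vi = nonzero_inverse[OF vec_closed[OF v i(1)] i(2)]
  define \<delta> where "\<delta> = vscale (b \<otimes> inv (v i)) (unit_vec i)"
  have \<delta>: "\<delta> \<in> V" using inv_vi b by (simp add: \<delta>_def)
  have "dot \<delta> v = b"
    using inv_vi b v i by (simp add: \<delta>_def dot_vscale_left dot_unit_vec m_assoc)
  then have "\<chi> (dot (vadd \<delta> m) v) = \<chi> b * \<chi> (dot m v)" if "m \<in> V" for m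
    using that \<delta> v b by (simp add: dot_vadd_left chi_add)
  then have "(\<Sum>m\<in>V. \<chi> (dot m v)) = 0"
    using bij_betw_vadd[OF \<delta>] b by (intro sum_eq_0_if_shift_scales[where z="\<chi> b"]) auto
  then show ?thesis using False by simp
qed (simp add: card_vecs)

lemma card_hyperplane_slice_le:
  assumes c: "c \<in> V" and p: "p < d" and r: "r < d" "r \<noteq> p" "c r \<noteq> \<zero>"
  shows "card {y \<in> V. y p = \<zero> \<and> dot y c = k} \<le> q ^ (d - 2)"
proof -
  let ?P = "{y \<in> V. y p = \<zero> \<and> dot y c = k}"
  let ?I = "{..<d} - {p, r}"
  have "inj_on (\<lambda>y. restrict y ?I) ?P"
  proof (rule inj_onI)
    fix y y' assume y: "y \<in> ?P" and y': "y' \<in> ?P" and eq: "restrict y ?I = restrict y' ?I"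
    let ?u = "vadd y (vneg y')"
    have u: "?u \<in> V" using y y' by simp
    have off_r: "y i = y' i" if "i < d" "i \<noteq> r" for i
      using y y' fun_cong[OF eq, of i] that by (cases "i = p") auto
    then have "?u i = \<zero>" if "i < d" "i \<noteq> r" for i
      using that y' by (simp add: r_neg)
    then have "?u r \<otimes> c r = dot ?u c" using dot_single_support[OF u c r(1)] by simp
    also have "\<dots> = \<zero>"
      using y y' c r_neg[OF dot_closed[of y c]] by (simp add: dot_vadd_left dot_vneg_left)
    finally have "y r = y' r" using y y' c r by (simp add: integral_iff flip: a_minus_def)
    then show "y = y'" using y y' off_r by (intro vec_eqI) auto
  qed
  moreover have "(\<lambda>y. restrict y ?I) ` ?P \<subseteq> ?I \<rightarrow>\<^sub>E carrier R"
    by (rule image_subsetI, subst restrict_PiE_iff) auto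
  ultimately have "card ?P \<le> card (?I \<rightarrow>\<^sub>E carrier R)"
    using finite_carrier by (intro card_inj_on_le) (auto simp: finite_PiE)
  also have "\<dots> = q ^ (d - 2)"
    using p r by (simp add: card_PiE card_Diff_subset numeral_2_eq_2)
  finally show ?thesis .
qed

definition perp_vec where "perp_vec c i m = vadd (vscale (c i) (unit_vec m)) (vscale (\<ominus> c m) (unit_vec i))"

lemma perp_vec_vec [simp]: "c \<in> V \<Longrightarrow> i < d \<Longrightarrow> m < d \<Longrightarrow> perp_vec c i m \<in> V"
  by (simp add: perp_vec_def)

lemma perp_vec_apply:
  "c \<in> V \<Longrightarrow> i < d \<Longrightarrow> m < d \<Longrightarrow> m \<noteq> i \<Longrightarrow> l < d \<Longrightarrow>
    perp_vec c i m l = (if l = m then c i else if l = i then \<ominus> c m else \<zero>)"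
  by (auto simp: perp_vec_def)

lemma dot_perp_vec:
  "c \<in> V \<Longrightarrow> i < d \<Longrightarrow> m < d \<Longrightarrow> u \<in> V \<Longrightarrow> dot (perp_vec c i m) u = c i \<otimes> u m \<oplus> \<ominus> c m \<otimes> u i"
  by (simp add: perp_vec_def dot_vadd_left dot_vscale_left dot_unit_vec)

lemma dot_perp_vec_self:
  assumes "c \<in> V" "i < d" "m < d"
  shows "dot (perp_vec c i m) c = \<zero>"
proof -
  have "c i \<in> carrier R" "c m \<in> carrier R" using assms by simp_all
  then have "c i \<otimes> c m \<oplus> \<ominus> c m \<otimes> c i = \<zero>" by algebra
  with assms show ?thesis by (simp add: dot_perp_vec)
qed

lemma orthogonal_perp_vecs_imp_parallel:
  assumes c: "c \<in> V" "i < d" "c i \<noteq> \<zero>" and u: "u \<in> V"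
    and perp: "\<And>l. l < d \<Longrightarrow> l \<noteq> i \<Longrightarrow> dot (perp_vec c i l) u = \<zero>"
  shows "u = vscale (u i \<otimes> inv (c i)) c"
proof (rule vec_eqI)
  fix l assume l: "l < d"
  note inv_c = nonzero_inverse[OF vec_closed[OF c(1,2)] c(3)]
  show "u l = vscale (u i \<otimes> inv (c i)) c l"
  proof (cases "l = i")
    case False
    have "c i \<otimes> u l \<oplus> \<ominus> c l \<otimes> u i = \<zero>" using perp[OF l False] c u l by (simp add: dot_perp_vec)
    then have eq: "c i \<otimes> u l = c l \<otimes> u i"
      using c u l r_right_minus_eq[of "c i \<otimes> u l" "c l \<otimes> u i"] by (simp add: a_minus_def l_minus)
    have "u l = inv (c i) \<otimes> (c i \<otimes> u l)" using c u l inv_c by (simp add: m_assoc[symmetric])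
    also have "\<dots> = u i \<otimes> inv (c i) \<otimes> c l" using c u l inv_c by (simp add: eq m_ac)
    finally show ?thesis using l by simp
  qed (use c u l inv_c in \<open>simp add: m_assoc\<close>)
qed (use c u in \<open>simp_all add: nonzero_inverse\<close>)

lemma dot_dim2:
  assumes "d = 2" "i < d" "x \<in> V" "v \<in> V"
  shows "dot x v = x i \<otimes> v i \<oplus> x (1 - i) \<otimes> v (1 - i)"
proof -
  have "{..<d} = insert i {1 - i}" "i \<noteq> 1 - i" using assms(1,2) by (simp_all add: set_eq_iff, arith+)
  then show ?thesis unfolding dotp_def using assms by (simp add: finsum_insert)
qed

lemma orthogonal_dim2:
  assumes d: "d = 2" and v: "v \<in> V" "i < d" "v i \<noteq> \<zero>" and x: "x \<in> V" "dot x v = \<zero>"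
  shows "x = vscale (x (1 - i) \<otimes> inv (v i)) (perp_vec v i (1 - i))"
proof -
  note inv_v = nonzero_inverse[OF vec_closed[OF v(1,2)] v(3)]
  have k: "1 - i < d" "1 - i \<noteq> i" using d v(2) by arith+
  have "x i \<otimes> v i \<oplus> x (1 - i) \<otimes> v (1 - i) = \<zero>" using dot_dim2[OF d v(2) x(1) v(1)] x(2) by simp
  then have xi: "x i \<otimes> v i = \<ominus> (x (1 - i) \<otimes> v (1 - i))" using x v k by (simp add: sum_zero_eq_neg)
  show ?thesis
  proof (rule vec_eqI)
    fix l assume l: "l < d"
    have "l = i \<or> l = 1 - i" using l d v(2) by arith
    then consider "l = i" | "l = 1 - i" by blast
    then show "x l = vscale (x (1 - i) \<otimes> inv (v i)) (perp_vec v i (1 - i)) l"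
    proof cases
      case 1
      have "x i = inv (v i) \<otimes> (x i \<otimes> v i)" using x v inv_v by (simp add: m_lcomm[of "inv (v i)"])
      also have "\<dots> = x (1 - i) \<otimes> inv (v i) \<otimes> \<ominus> v (1 - i)"
        using x v k inv_v by (simp add: xi m_ac l_minus r_minus)
      finally show ?thesis using 1 x v k by (simp add: perp_vec_apply)
    next
      case 2
      then show ?thesis using x v k inv_v by (simp add: perp_vec_apply m_assoc)
    qed
  qed (use v x k inv_v in simp_all)
qed

lemma parseval_exp_sum:
  fixes sv :: "'b \<Rightarrow> nat \<Rightarrow> nat" and h :: "'b \<Rightarrow> complex"
  assumes P: "finite P" and sv: "\<And>p. p \<in> P \<Longrightarrow> sv p \<in> V"
  shows "(\<Sum>m\<in>V. (cmod (\<Sum>p\<in>P. \<chi> (\<ominus> dot (sv p) m) * h p))\<^sup>2)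
       = real (q ^ d) * Re (\<Sum>p\<in>P. \<Sum>p'\<in>P. if sv p = sv p' then h p * cnj (h p') else 0)"
proof -
  let ?Z = "\<Sum>p\<in>P. \<Sum>p'\<in>P. if sv p = sv p' then h p * cnj (h p') else 0"
  let ?diff = "\<lambda>p p'. vadd (sv p') (vneg (sv p))"
  have phase: "\<chi> (\<ominus> dot (sv p) m) * cnj (\<chi> (\<ominus> dot (sv p') m)) = \<chi> (dot m (?diff p p'))"
    if "m \<in> V" "p \<in> P" "p' \<in> P" for m p p'
  proof -
    have "dot m (?diff p p') = \<ominus> dot (sv p) m \<oplus> dot (sv p') m"
      using sv that by (simp add: dot_vadd_right dot_vneg_right dot_comm[of m] a_comm)
    then show ?thesis using sv that by (simp add: cnj_chi chi_add)
  qed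
  have orth: "(\<Sum>m\<in>V. \<chi> (dot m (?diff p p'))) = (if sv p = sv p' then of_nat (q ^ d) else 0)"
    if "p \<in> P" "p' \<in> P" for p p'
    using sum_chi_dot[of "?diff p p'"] vsub_eq_vzero_iff[of "sv p'" "sv p"] sv that by auto
  have "complex_of_real (\<Sum>m\<in>V. (cmod (\<Sum>p\<in>P. \<chi> (\<ominus> dot (sv p) m) * h p))\<^sup>2)
      = (\<Sum>m\<in>V. (\<Sum>p\<in>P. \<chi> (\<ominus> dot (sv p) m) * h p) * cnj (\<Sum>p\<in>P. \<chi> (\<ominus> dot (sv p) m) * h p))"
    by (simp only: of_real_sum complex_norm_square)
  also have "\<dots> = (\<Sum>m\<in>V. \<Sum>p\<in>P. \<Sum>p'\<in>P. h p * cnj (h p') * \<chi> (dot m (?diff p p')))"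
    by (intro sum.cong refl) (simp add: cnj_sum sum_product phase[symmetric] mult_ac cong: sum.cong)
  also have "\<dots> = (\<Sum>p\<in>P. \<Sum>p'\<in>P. h p * cnj (h p') * (\<Sum>m\<in>V. \<chi> (dot m (?diff p p'))))"
    by (simp add: sum.swap[of _ V] sum_distrib_left)
  also have "\<dots> = of_nat (q ^ d) * ?Z"
  proof -
    have "h p * cnj (h p') * (\<Sum>m\<in>V. \<chi> (dot m (?diff p p')))
        = of_nat (q ^ d) * (if sv p = sv p' then h p * cnj (h p') else 0)" if "p \<in> P" "p' \<in> P" for p p'
      using orth[OF that] by simp
    then show ?thesis by (simp add: sum_distrib_left cong: sum.cong)
  qed
  finally have eq: "complex_of_real (\<Sum>m\<in>V. (cmod (\<Sum>p\<in>P. \<chi> (\<ominus> dot (sv p) m) * h p))\<^sup>2)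
      = of_nat (q ^ d) * ?Z" .
  have "(\<Sum>m\<in>V. (cmod (\<Sum>p\<in>P. \<chi> (\<ominus> dot (sv p) m) * h p))\<^sup>2)
      = Re (complex_of_real (\<Sum>m\<in>V. (cmod (\<Sum>p\<in>P. \<chi> (\<ominus> dot (sv p) m) * h p))\<^sup>2))"
    by (simp only: Re_complex_of_real)
  also have "\<dots> = Re (of_nat (q ^ d) * ?Z)" by (simp only: eq)
  also have "\<dots> = real (q ^ d) * Re ?Z" by simp
  finally show ?thesis .
qed

end

section \<open>Non-degenerate quadratic forms and Gauss sums\<close>

locale fq_quadric = fq_space +
  fixes A :: "nat \<Rightarrow> nat \<Rightarrow> nat"
  assumes symmetric: "sym_coeffs R d A" and invertible: "mat_invertible R d A"
    and two_nonzero: "\<one> \<oplus> \<one> \<noteq> \<zero>"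
begin

abbreviation Q where "Q \<equiv> quad_form R d A"

definition matvec where "matvec x = (\<lambda>i\<in>{..<d}. \<Oplus>k\<in>{..<d}. A i k \<otimes> x k)"

lemma coeff_closed [simp]: "i < d \<Longrightarrow> k < d \<Longrightarrow> A i k \<in> carrier R"
  and coeff_sym: "i < d \<Longrightarrow> k < d \<Longrightarrow> A i k = A k i"
  using symmetric by (simp_all add: sym_coeffs_def)

lemma matvec_vec [simp]: "x \<in> V \<Longrightarrow> matvec x \<in> V"
  by (auto simp: vecs_def matvec_def PiE_iff intro!: finsum_closed)

lemma matvec_apply: "i < d \<Longrightarrow> matvec x i = (\<Oplus>k\<in>{..<d}. A i k \<otimes> x k)"
  by (simp add: matvec_def)

lemma matvec_vadd: "x \<in> V \<Longrightarrow> y \<in> V \<Longrightarrow> matvec (vadd x y) = vadd (matvec x) (matvec y)"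
proof (rule vec_eqI)
  fix i assume xy: "x \<in> V" "y \<in> V" and i: "i < d"
  have "matvec (vadd x y) i = (\<Oplus>k\<in>{..<d}. A i k \<otimes> x k \<oplus> A i k \<otimes> y k)"
    unfolding matvec_apply[OF i] using xy i by (intro finsum_cong) (auto simp: r_distr)
  also have "\<dots> = matvec x i \<oplus> matvec y i"
    unfolding matvec_apply[OF i] using xy i by (intro finsum_addf) auto
  finally show "matvec (vadd x y) i = vadd (matvec x) (matvec y) i" using i by simp
qed simp_all

lemma matvec_vscale: "c \<in> carrier R \<Longrightarrow> x \<in> V \<Longrightarrow> matvec (vscale c x) = vscale c (matvec x)"
proof (rule vec_eqI)
  fix i assume cx: "c \<in> carrier R" "x \<in> V" and i: "i < d"
  have "matvec (vscale c x) i = (\<Oplus>k\<in>{..<d}. c \<otimes> (A i k \<otimes> x k))"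
    unfolding matvec_apply[OF i] using cx i by (intro finsum_cong) (auto simp: m_lcomm)
  also have "\<dots> = c \<otimes> matvec x i"
    unfolding matvec_apply[OF i] using cx i by (intro finsum_rdistr[symmetric]) auto
  finally show "matvec (vscale c x) i = vscale c (matvec x) i" using i by simp
qed simp_all

lemma matvec_vneg: "x \<in> V \<Longrightarrow> matvec (vneg x) = vneg (matvec x)"
  by (simp add: vneg_eq_vscale matvec_vscale)

lemma matvec_vzero [simp]: "matvec vzero = vzero"
  by (rule vec_eqI) (simp_all add: matvec_apply finsum_zero cong: finsum_cong)

(* Multiplying by a left inverse B of A recovers the components of x. *)
lemma matvec_eq_vzero_iff:
  assumes x: "x \<in> V"
  shows "matvec x = vzero \<longleftrightarrow> x = vzero"
proof
  assume Ax: "matvec x = vzero"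
  obtain B where "\<forall>i<d. \<forall>k<d. B i k \<in> carrier R"
    "\<forall>i<d. \<forall>l<d. (\<Oplus>k\<in>{..<d}. B i k \<otimes> A k l) = (if i = l then \<one> else \<zero>)"
    using invertible unfolding mat_invertible_def by blast
  then have B: "\<And>i k. i < d \<Longrightarrow> k < d \<Longrightarrow> B i k \<in> carrier R"
    "\<And>i l. i < d \<Longrightarrow> l < d \<Longrightarrow> (\<Oplus>k\<in>{..<d}. B i k \<otimes> A k l) = (if i = l then \<one> else \<zero>)"
    by simp_all
  show "x = vzero"
  proof (rule vec_eqI)
    fix l assume l: "l < d"
    have expand: "B l k \<otimes> matvec x k = (\<Oplus>i\<in>{..<d}. B l k \<otimes> A k i \<otimes> x i)" if k: "k < d" for k
      using l k B(1) x by (simp add: matvec_apply finsum_rdistr) (rule finsum_cong', auto simp: m_assoc)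
    have collect: "(\<Oplus>k\<in>{..<d}. B l k \<otimes> A k i \<otimes> x i) = (if l = i then x i else \<zero>)"
      if i: "i < d" for i
      using l i B x by (simp add: finsum_ldistr[symmetric])
    have "\<zero> = (\<Oplus>k\<in>{..<d}. B l k \<otimes> matvec x k)"
      using Ax l B(1) by (simp add: finsum_zero cong: finsum_cong)
    also have "\<dots> = (\<Oplus>k\<in>{..<d}. \<Oplus>i\<in>{..<d}. B l k \<otimes> A k i \<otimes> x i)"
      using l B(1) x by (intro finsum_cong') (auto simp: expand intro!: finsum_closed)
    also have "\<dots> = (\<Oplus>i\<in>{..<d}. if l = i then x i else \<zero>)"
      using l B(1) x by (subst finsum_swap) (auto simp: collect intro!: finsum_cong')
    also have "\<dots> = x l" using l x by (intro finsum_singleton) auto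
    finally show "x l = vzero l" using l by simp
  qed (simp_all add: x)
qed simp

lemma inj_on_matvec: "inj_on matvec V"
proof (rule inj_onI)
  fix x y assume xy: "x \<in> V" "y \<in> V" "matvec x = matvec y"
  then have "matvec (vadd x (vneg y)) = vzero"
    by (simp add: matvec_vadd matvec_vneg vsub_eq_vzero_iff)
  then show "x = y" using xy by (simp add: matvec_eq_vzero_iff vsub_eq_vzero_iff)
qed

lemma quad_form_eq_dot:
  assumes x: "x \<in> V"
  shows "Q x = dot x (matvec x)"
  unfolding quad_form_def dotp_def
proof (rule finsum_cong')
  fix i assume i: "i \<in> {..<d}"
  have "x i \<otimes> matvec x i = (\<Oplus>k\<in>{..<d}. x i \<otimes> (A i k \<otimes> x k))"
    using x i by (simp add: matvec_apply finsum_rdistr)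
  also have "\<dots> = (\<Oplus>k\<in>{..<d}. A i k \<otimes> x i \<otimes> x k)"
    using x i by (intro finsum_cong) (auto simp: m_ac)
  finally show "(\<Oplus>k\<in>{..<d}. A i k \<otimes> x i \<otimes> x k) = x i \<otimes> matvec x i" by simp
qed (use x in auto)

lemma dot_matvec_sym: "x \<in> V \<Longrightarrow> y \<in> V \<Longrightarrow> dot x (matvec y) = dot y (matvec x)"
proof -
  assume xy: "x \<in> V" "y \<in> V"
  have "dot x (matvec y) = (\<Oplus>i\<in>{..<d}. \<Oplus>k\<in>{..<d}. x i \<otimes> (A i k \<otimes> y k))"
    unfolding dotp_def using xy
    by (intro finsum_cong') (auto simp: matvec_apply finsum_rdistr intro!: finsum_closed)
  also have "\<dots> = (\<Oplus>k\<in>{..<d}. \<Oplus>i\<in>{..<d}. y k \<otimes> (A k i \<otimes> x i))"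
  proof -
    have "x i \<otimes> (A i k \<otimes> y k) = y k \<otimes> (A k i \<otimes> x i)" if "i < d" "k < d" for i k
      using that xy coeff_sym[of i k] by (simp add: m_ac)
    then show ?thesis using xy by (subst finsum_swap) (auto intro!: finsum_cong')
  qed
  also have "\<dots> = dot y (matvec x)"
    unfolding dotp_def using xy
    by (intro finsum_cong') (auto simp: matvec_apply finsum_rdistr intro!: finsum_closed)
  finally show ?thesis .
qed

lemma quad_form_closed [simp]: "x \<in> V \<Longrightarrow> Q x \<in> carrier R"
  by (simp add: quad_form_eq_dot)

lemma quad_form_vzero [simp]: "Q vzero = \<zero>"
  by (simp add: quad_form_eq_dot)

lemma quad_form_vadd:
  assumes "y \<in> V" "h \<in> V"
  shows "Q (vadd y h) = Q y \<oplus> Q h \<oplus> (\<one> \<oplus> \<one>) \<otimes> dot y (matvec h)"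
proof -
  have "Q (vadd y h) = dot y (matvec y) \<oplus> dot h (matvec y) \<oplus> (dot y (matvec h) \<oplus> dot h (matvec h))"
    using assms by (simp add: quad_form_eq_dot matvec_vadd dot_vadd_left dot_vadd_right)
  moreover have "a \<oplus> b \<oplus> (b \<oplus> c) = a \<oplus> c \<oplus> (\<one> \<oplus> \<one>) \<otimes> b"
    if "a \<in> carrier R" "b \<in> carrier R" "c \<in> carrier R" for a b c
    using that by algebra
  ultimately show ?thesis
    using assms dot_matvec_sym[OF assms(2,1)] by (simp add: quad_form_eq_dot)
qed

lemma quad_form_vscale: "c \<in> carrier R \<Longrightarrow> x \<in> V \<Longrightarrow> Q (vscale c x) = c \<otimes> c \<otimes> Q x"
  by (simp add: quad_form_eq_dot matvec_vscale dot_vscale_left dot_vscale_right m_assoc)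

lemma quad_form_vneg: "x \<in> V \<Longrightarrow> Q (vneg x) = Q x"
  by (simp add: vneg_eq_vscale quad_form_vscale l_minus r_minus minus_minus)

lemma isotropic_polarization:
  assumes "a \<in> V" "b \<in> V" "Q a = \<zero>" "Q b = \<zero>" "Q (vadd a b) = \<zero>"
  shows "dot a (matvec b) = \<zero>"
proof -
  have "(\<one> \<oplus> \<one>) \<otimes> dot a (matvec b) = \<zero>" using quad_form_vadd[of a b] assms by simp
  then show ?thesis using two_nonzero assms by (simp add: integral_iff)
qed

definition gauss_sum where "gauss_sum t = (\<Sum>x\<in>V. \<chi> (t \<otimes> Q x))"

(* With x = y + h the phase becomes t Q(h) + 2t (y . Ah); summing over y kills every h with Ah \<noteq> 0,
   and by invertibility only h = 0 survives. *)
lemma gauss_sum_mult_cnj: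
  assumes t: "t \<in> carrier R" "t \<noteq> \<zero>"
  shows "gauss_sum t * cnj (gauss_sum t) = of_nat (q ^ d)"
proof -
  define c where "c = t \<otimes> (\<one> \<oplus> \<one>)"
  have c: "c \<in> carrier R" "c \<noteq> \<zero>" using t two_nonzero by (auto simp: c_def integral_iff)
  have expand: "t \<otimes> (a \<oplus> b \<oplus> (\<one> \<oplus> \<one>) \<otimes> e) \<oplus> \<ominus> (t \<otimes> a) = t \<otimes> b \<oplus> c \<otimes> e"
    if "a \<in> carrier R" "b \<in> carrier R" "e \<in> carrier R" for a b e
    using that t unfolding c_def by algebra
  have "gauss_sum t * cnj (gauss_sum t) = (\<Sum>x\<in>V. \<Sum>y\<in>V. \<chi> (t \<otimes> Q x) * \<chi> (\<ominus> (t \<otimes> Q y)))"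
    by (simp add: gauss_sum_def cnj_sum sum_product cnj_chi t)
  also have "\<dots> = (\<Sum>y\<in>V. \<Sum>x\<in>V. \<chi> (t \<otimes> Q x) * \<chi> (\<ominus> (t \<otimes> Q y)))"
    by (rule sum.swap)
  also have "\<dots> = (\<Sum>y\<in>V. \<Sum>h\<in>V. \<chi> (t \<otimes> Q h) * \<chi> (dot y (vscale c (matvec h))))"
  proof (rule sum.cong[OF refl])
    fix y assume y: "y \<in> V"
    have "(\<Sum>x\<in>V. \<chi> (t \<otimes> Q x) * \<chi> (\<ominus> (t \<otimes> Q y)))
        = (\<Sum>h\<in>V. \<chi> (t \<otimes> Q (vadd y h)) * \<chi> (\<ominus> (t \<otimes> Q y)))"
      using sum.reindex_bij_betw[OF bij_betw_vadd[OF y], of "\<lambda>x. \<chi> (t \<otimes> Q x) * \<chi> (\<ominus> (t \<otimes> Q y))"] by simp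
    also have "\<dots> = (\<Sum>h\<in>V. \<chi> (t \<otimes> Q h) * \<chi> (dot y (vscale c (matvec h))))"
      using y t c by (intro sum.cong refl)
        (simp add: chi_add[symmetric] quad_form_vadd expand dot_vscale_right)
    finally show "(\<Sum>x\<in>V. \<chi> (t \<otimes> Q x) * \<chi> (\<ominus> (t \<otimes> Q y)))
        = (\<Sum>h\<in>V. \<chi> (t \<otimes> Q h) * \<chi> (dot y (vscale c (matvec h))))" .
  qed
  also have "\<dots> = (\<Sum>h\<in>V. \<chi> (t \<otimes> Q h) * (\<Sum>y\<in>V. \<chi> (dot y (vscale c (matvec h)))))"
    by (subst sum.swap) (simp add: sum_distrib_left)
  also have "\<dots> = (\<Sum>h\<in>V. if h = vzero then of_nat (q ^ d) else 0)"
    using c t by (intro sum.cong refl) (simp add: sum_chi_dot vscale_eq_vzero_iff matvec_eq_vzero_iff)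
  also have "\<dots> = of_nat (q ^ d)" by (simp add: finite_vecs)
  finally show ?thesis .
qed

lemma norm_gauss_sum: "t \<in> carrier R \<Longrightarrow> t \<noteq> \<zero> \<Longrightarrow> cmod (gauss_sum t) = sqrt (real q) ^ d"
  by (simp add: complex_mod_sqrt_Re_mult_cnj gauss_sum_mult_cnj real_sqrt_power)

lemma gauss_sum_scale_square:
  assumes t: "t \<in> carrier R" and u: "u \<in> carrier R" "u \<noteq> \<zero>"
  shows "gauss_sum (t \<otimes> u \<otimes> u) = gauss_sum t"
proof -
  note inv_u = nonzero_inverse[OF u]
  have "bij_betw (vscale u) V V"
    by (rule bij_betwI[where g="vscale (inv u)"]) (use u inv_u in \<open>auto simp: vscale_vscale\<close>)
  then have "gauss_sum t = (\<Sum>x\<in>V. \<chi> (t \<otimes> Q (vscale u x)))"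
    unfolding gauss_sum_def using sum.reindex_bij_betw[of "vscale u" V V "\<lambda>x. \<chi> (t \<otimes> Q x)"] by simp
  also have "\<dots> = gauss_sum (t \<otimes> u \<otimes> u)"
    unfolding gauss_sum_def using t u by (intro sum.cong refl) (simp add: quad_form_vscale m_assoc)
  finally show ?thesis by simp
qed

(* In a non-degenerate plane, w and y are both multiples of the vector orthogonal to Aw. *)
lemma isotropic_orthogonal_dim2:
  assumes d: "d = 2" and w: "w \<in> V" "w \<noteq> vzero" "Q w = \<zero>" and y: "y \<in> V" "dot y (matvec w) = \<zero>"
  shows "Q y = \<zero>"
proof -
  obtain k where k: "k < d" "matvec w k \<noteq> \<zero>"
    using vec_nonzero_component[of "matvec w"] w matvec_eq_vzero_iff by auto
  have "1 - k < d" using d k(1) by arith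
  let ?p = "perp_vec (matvec w) k (1 - k)"
  define a where "a = w (1 - k) \<otimes> inv (matvec w k)"
  define b where "b = y (1 - k) \<otimes> inv (matvec w k)"
  have "dot w (matvec w) = \<zero>" using w by (simp add: quad_form_eq_dot)
  then have w_eq: "w = vscale a ?p"
    unfolding a_def using orthogonal_dim2[OF d matvec_vec[OF w(1)] k w(1)] by blast
  have y_eq: "y = vscale b ?p"
    unfolding b_def using orthogonal_dim2[OF d matvec_vec[OF w(1)] k y] .
  have ab: "a \<in> carrier R" "b \<in> carrier R" "?p \<in> V"
    using w y k \<open>1 - k < d\<close> by (simp_all add: a_def b_def nonzero_inverse)
  have "a \<noteq> \<zero>" using w_eq w(2) ab by auto
  have "a \<otimes> a \<otimes> Q ?p = \<zero>" using quad_form_vscale[OF ab(1,3)] w_eq[symmetric] w(3) by simp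
  then have "Q ?p = \<zero>" using \<open>a \<noteq> \<zero>\<close> ab by (simp add: integral_iff)
  then show ?thesis using quad_form_vscale[OF ab(2,3)] y_eq[symmetric] ab by simp
qed

lemma parallel_if_matvec_orthogonal_perp_vecs:
  assumes z: "z \<in> V" and i: "i < d" "matvec z i \<noteq> \<zero>" and u: "u \<in> V"
    and orth: "\<And>l. l < d \<Longrightarrow> l \<noteq> i \<Longrightarrow> dot (perp_vec (matvec z) i l) (matvec u) = \<zero>"
  obtains \<mu> where "\<mu> \<in> carrier R" "u = vscale \<mu> z"
proof -
  let ?\<mu> = "matvec u i \<otimes> inv (matvec z i)"
  have \<mu>: "?\<mu> \<in> carrier R" using u z i by (simp add: nonzero_inverse)
  have "matvec u = vscale ?\<mu> (matvec z)"
    using orthogonal_perp_vecs_imp_parallel[of "matvec z" i "matvec u"] z i u orth by simp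
  then have "matvec u = matvec (vscale ?\<mu> z)" using z \<mu> by (simp add: matvec_vscale)
  then have "u = vscale ?\<mu> z" using inj_on_matvec u z \<mu> by (simp add: inj_on_eq_iff)
  then show ?thesis using that \<mu> by blast
qed

(* Otherwise Q vanishes on all perp_vec c i l (l \<noteq> i) and on their pairwise sums; by polarization every
   A (perp_vec c i l) is orthogonal to all of them, hence parallel to c = Az, so each perp_vec c i l is
   parallel to z. Two of them have different supports, which is impossible. *)
lemma anisotropic_perp_direction:
  assumes d3: "3 \<le> d" and z: "z \<in> V" and i: "i < d" "matvec z i \<noteq> \<zero>"
  obtains w p where "w \<in> V" "p < d" "p \<noteq> i" "w p \<noteq> \<zero>" "dot w (matvec z) = \<zero>" "Q w \<noteq> \<zero>"
proof -
  let ?c = "matvec z"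
  let ?w = "perp_vec ?c i"
  have c: "?c \<in> V" "?c i \<in> carrier R" using z i by simp_all
  have w: "?w m \<in> V" "?w m m = ?c i" "dot (?w m) ?c = \<zero>" if "m < d" "m \<noteq> i" for m
    using that c i by (simp_all add: perp_vec_apply dot_perp_vec_self)
  have "\<exists>w p. w \<in> V \<and> p < d \<and> p \<noteq> i \<and> w p \<noteq> \<zero> \<and> dot w ?c = \<zero> \<and> Q w \<noteq> \<zero>"
  proof (rule ccontr)
    assume none: "\<not> ?thesis"
    have isotropic: "Q w = \<zero>" if "w \<in> V" "p < d" "p \<noteq> i" "w p \<noteq> \<zero>" "dot w ?c = \<zero>" for w p
      using none that by blast
    have Q_w: "Q (?w m) = \<zero>" if "m < d" "m \<noteq> i" for m
      using isotropic[of "?w m" m] w[OF that] that i by simp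
    have Q_ww: "Q (vadd (?w m) (?w l)) = \<zero>" if "m < d" "m \<noteq> i" "l < d" "l \<noteq> i" "l \<noteq> m" for m l
      using isotropic[of "vadd (?w m) (?w l)" m] w[of m] w[of l] that c i
      by (simp add: perp_vec_apply dot_vadd_left)
    have orth: "dot (?w m) (matvec (?w l)) = \<zero>" if "m < d" "m \<noteq> i" "l < d" "l \<noteq> i" for m l
    proof (cases "m = l")
      case True
      then show ?thesis using Q_w[of l] w[of l] that by (simp add: quad_form_eq_dot)
    next
      case False
      then show ?thesis using that w[of m] w[of l]
        by (intro isotropic_polarization Q_w Q_ww) auto
    qed
    define k1 where "k1 = (if i = 0 then 1 else (0::nat))"
    define k2 where "k2 = (if i = 2 then 1 else (2::nat))"
    have k: "k1 < d" "k1 \<noteq> i" "k2 < d" "k2 \<noteq> i" "k1 \<noteq> k2" using d3 by (auto simp: k1_def k2_def)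
    obtain \<mu>1 where \<mu>1: "\<mu>1 \<in> carrier R" "?w k1 = vscale \<mu>1 z"
      using parallel_if_matvec_orthogonal_perp_vecs[OF z i w(1)[OF k(1,2)] orth[OF _ _ k(1,2)]] .
    obtain \<mu>2 where \<mu>2: "\<mu>2 \<in> carrier R" "?w k2 = vscale \<mu>2 z"
      using parallel_if_matvec_orthogonal_perp_vecs[OF z i w(1)[OF k(3,4)] orth[OF _ _ k(3,4)]] .
    have "?c i = \<mu>1 \<otimes> z k1" using fun_cong[OF \<mu>1(2), of k1] w[of k1] k by simp
    then have "z k1 \<noteq> \<zero>" using i \<mu>1(1) by auto
    moreover have "\<mu>2 \<otimes> z k1 = \<zero>" using fun_cong[OF \<mu>2(2), of k1] k c i by (simp add: perp_vec_apply)
    ultimately have "\<mu>2 = \<zero>" using z k \<mu>2(1) integral_iff[of \<mu>2 "z k1"] by auto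
    moreover have "?c i = \<mu>2 \<otimes> z k2" using fun_cong[OF \<mu>2(2), of k2] w[of k2] k by simp
    ultimately show False using i z k by simp
  qed
  then show ?thesis using that by blast
qed

end

section \<open>The sphere Q = j\<close>

locale fq_sphere = fq_quadric +
  fixes j :: nat
  assumes j_closed: "j \<in> carrier R" and j_nonzero: "j \<noteq> \<zero>" and dim: "2 \<le> d"
begin

abbreviation S where "S \<equiv> sphere_set R d A j"
abbreviation nonzeros where "nonzeros \<equiv> carrier R - {\<zero>}"

lemma sphere_iff: "x \<in> S \<longleftrightarrow> x \<in> V \<and> Q x = j"
  by (simp add: sphere_set_def)

lemma sphere_subset: "S \<subseteq> V"
  by (auto simp: sphere_iff)

lemma finite_sphere: "finite S"
  using finite_vecs sphere_subset by (rule finite_subset[rotated])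

lemma q_ge_3: "3 \<le> q"
  using card_carrier_ge_3[OF finite_carrier two_nonzero] .

lemma card_sphere_gauss_expansion:
  "of_nat q * of_nat (card S) = of_nat (q ^ d) + (\<Sum>t\<in>nonzeros. \<chi> (\<ominus> (t \<otimes> j)) * gauss_sum t)"
proof -
  let ?N = "\<Sum>x\<in>V. \<Sum>t\<in>carrier R. \<chi> ((Q x \<ominus> j) \<otimes> t)"
  have "?N = (\<Sum>x\<in>V. if Q x = j then of_nat q else 0)"
    using j_closed by (intro sum.cong refl) (simp add: sum_chi_mult)
  also have "\<dots> = of_nat q * of_nat (card S)"
    using sum.inter_filter[OF finite_vecs, of "\<lambda>x. of_nat q :: complex" "\<lambda>x. Q x = j", symmetric]
    by (simp add: sphere_set_def mult.commute)
  finally have count: "?N = of_nat q * of_nat (card S)" .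
  have phase: "\<chi> ((Q x \<ominus> j) \<otimes> t) = \<chi> (\<ominus> (t \<otimes> j)) * \<chi> (t \<otimes> Q x)"
    if "x \<in> V" "t \<in> carrier R" for x t
  proof -
    have "(Q x \<ominus> j) \<otimes> t = \<ominus> (t \<otimes> j) \<oplus> t \<otimes> Q x" using that j_closed quad_form_closed[of x] by algebra
    then show ?thesis using that j_closed by (simp add: chi_add)
  qed
  have "?N = (\<Sum>t\<in>carrier R. \<Sum>x\<in>V. \<chi> ((Q x \<ominus> j) \<otimes> t))"
    by (rule sum.swap)
  also have "\<dots> = (\<Sum>x\<in>V. \<chi> ((Q x \<ominus> j) \<otimes> \<zero>)) + (\<Sum>t\<in>nonzeros. \<Sum>x\<in>V. \<chi> ((Q x \<ominus> j) \<otimes> t))"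
    by (subst sum.remove[of _ \<zero>]) (auto simp: finite_carrier)
  also have "\<dots> = of_nat (q ^ d) + (\<Sum>t\<in>nonzeros. \<chi> (\<ominus> (t \<otimes> j)) * gauss_sum t)"
    using j_closed by (simp add: card_vecs phase gauss_sum_def sum_distrib_left)
  finally show ?thesis using count by simp
qed

(* The substitution t \<mapsto> t u\<^sup>2 leaves the Gauss sum unchanged; averaging over u turns the phase
   \<chi>(-tj) into a scalar Gauss sum. *)
lemma sphere_error_average:
  "of_nat (q - 1) * (\<Sum>t\<in>nonzeros. \<chi> (\<ominus> (t \<otimes> j)) * gauss_sum t)
     = (\<Sum>s\<in>nonzeros. gauss_sum s * (scalar_gauss_sum (\<ominus> (s \<otimes> j)) - 1))"
proof -
  let ?E = "\<Sum>t\<in>nonzeros. \<chi> (\<ominus> (t \<otimes> j)) * gauss_sum t"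
  have rescale: "?E = (\<Sum>s\<in>nonzeros. \<chi> (\<ominus> (s \<otimes> j) \<otimes> inv u \<otimes> inv u) * gauss_sum s)"
    if u: "u \<in> nonzeros" for u
  proof -
    have "u \<in> carrier R" "u \<noteq> \<zero>" using u by auto
    note inv_u = nonzero_inverse[OF this]
    have cancel: "a \<otimes> inv u \<otimes> inv u \<otimes> u \<otimes> u = a" if "a \<in> carrier R" for a
      using that u inv_u by (simp add: m_assoc m_lcomm[of "inv u" u])
    have "bij_betw (\<lambda>s. s \<otimes> inv u \<otimes> inv u) nonzeros nonzeros"
      by (rule bij_betwI[where g="\<lambda>t. t \<otimes> u \<otimes> u"])
        (use u inv_u in \<open>auto simp: cancel integral_iff m_assoc m_lcomm[of u "inv u"]\<close>)
    then have "?E = (\<Sum>s\<in>nonzeros. \<chi> (\<ominus> (s \<otimes> inv u \<otimes> inv u \<otimes> j)) * gauss_sum (s \<otimes> inv u \<otimes> inv u))"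
      using sum.reindex_bij_betw[of _ nonzeros nonzeros "\<lambda>t. \<chi> (\<ominus> (t \<otimes> j)) * gauss_sum t"] by simp
    also have "\<dots> = (\<Sum>s\<in>nonzeros. \<chi> (\<ominus> (s \<otimes> j) \<otimes> inv u \<otimes> inv u) * gauss_sum s)"
    proof (intro sum.cong refl arg_cong2[where f=times] arg_cong[where f=\<chi>])
      fix s assume s: "s \<in> nonzeros"
      have "s \<in> carrier R" using s by simp
      then show "\<ominus> (s \<otimes> inv u \<otimes> inv u \<otimes> j) = \<ominus> (s \<otimes> j) \<otimes> inv u \<otimes> inv u"
        using inv_u(1) j_closed by algebra
      show "gauss_sum (s \<otimes> inv u \<otimes> inv u) = gauss_sum s"
        using s u inv_u by (simp add: gauss_sum_scale_square)
    qed
    finally show ?thesis .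
  qed
  have "of_nat (q - 1) * ?E = (\<Sum>u\<in>nonzeros. ?E)"
    using finite_carrier by (simp add: card_Diff_singleton)
  also have "\<dots> = (\<Sum>u\<in>nonzeros. \<Sum>s\<in>nonzeros. \<chi> (\<ominus> (s \<otimes> j) \<otimes> inv u \<otimes> inv u) * gauss_sum s)"
    using rescale by (rule sum.cong[OF refl])
  also have "\<dots> = (\<Sum>s\<in>nonzeros. gauss_sum s * (\<Sum>u\<in>nonzeros. \<chi> (\<ominus> (s \<otimes> j) \<otimes> inv u \<otimes> inv u)))"
    by (subst sum.swap) (simp add: sum_distrib_left mult.commute)
  also have "\<dots> = (\<Sum>s\<in>nonzeros. gauss_sum s * (scalar_gauss_sum (\<ominus> (s \<otimes> j)) - 1))"
    using j_closed by (intro sum.cong refl) (simp add: sum_chi_inverse_squares)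
  finally show ?thesis .
qed

lemma norm_sphere_error_le:
  "cmod (\<Sum>t\<in>nonzeros. \<chi> (\<ominus> (t \<otimes> j)) * gauss_sum t) \<le> sqrt (real q) ^ d * (sqrt (real q) + 1)"
proof -
  let ?E = "\<Sum>t\<in>nonzeros. \<chi> (\<ominus> (t \<otimes> j)) * gauss_sum t"
  have term_le: "cmod (gauss_sum s * (scalar_gauss_sum (\<ominus> (s \<otimes> j)) - 1)) \<le> sqrt (real q) ^ d * (sqrt (real q) + 1)"
    if s: "s \<in> nonzeros" for s
  proof -
    have "\<ominus> (s \<otimes> j) \<in> carrier R" "\<ominus> (s \<otimes> j) \<noteq> \<zero>" using s j_closed j_nonzero by (auto simp: integral_iff)
    then have "cmod (scalar_gauss_sum (\<ominus> (s \<otimes> j)) - 1) \<le> sqrt (real q) + 1"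
      using norm_triangle_ineq4[of "scalar_gauss_sum (\<ominus> (s \<otimes> j))" 1] two_nonzero
      by (simp add: norm_scalar_gauss_sum)
    then show ?thesis using s by (simp add: norm_mult norm_gauss_sum mult_left_mono)
  qed
  have "real (q - 1) * cmod ?E = cmod (\<Sum>s\<in>nonzeros. gauss_sum s * (scalar_gauss_sum (\<ominus> (s \<otimes> j)) - 1))"
    by (simp add: norm_mult flip: sphere_error_average)
  also have "\<dots> \<le> (\<Sum>s\<in>nonzeros. sqrt (real q) ^ d * (sqrt (real q) + 1))"
    by (rule order_trans[OF norm_sum sum_mono[OF term_le]])
  also have "\<dots> = real (q - 1) * (sqrt (real q) ^ d * (sqrt (real q) + 1))"
    using finite_carrier by (simp add: card_Diff_singleton)
  finally show ?thesis using q_ge_3 by simp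
qed

(* From q|S| \<ge> q\<^sup>d - s\<^sup>d (s + 1) with s = \<surd>q \<ge> \<surd>3, using s + 1 \<le> 19/20 s\<^sup>2 \<le> 19/20 s\<^sup>d. *)
lemma card_sphere_lower_bound: "real q ^ (d - 1) \<le> 20 * real (card S)"
proof -
  let ?E = "\<Sum>t\<in>nonzeros. \<chi> (\<ominus> (t \<otimes> j)) * gauss_sum t"
  define s where "s = sqrt (real q)"
  have s: "s \<ge> 0" "s * s = real q" by (simp_all add: s_def)
  have s_ge: "s \<ge> 17/10"
  proof (rule ccontr)
    assume "\<not> s \<ge> 17/10"
    then have "s * s < 17/10 * (17/10)" using s(1) by (intro mult_strict_mono) auto
    then show False using s(2) q_ge_3 by simp
  qed
  have "0 \<le> (s - 17/10) * (19/20 * s + 123/200)" using s_ge by simp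
  moreover have "(s - 17/10) * (19/20 * s + 123/200) = 19/20 * (s * s) - s - 1 - 91/2000"
    by (simp add: field_simps)
  ultimately have "s + 1 \<le> 19/20 * (s * s)" by linarith
  also have "\<dots> \<le> 19/20 * s ^ d"
    using power_increasing[OF dim, of s] s_ge by (simp add: power2_eq_square)
  finally have "s ^ d * (s + 1) \<le> s ^ d * (19/20 * s ^ d)" using s(1) by (intro mult_left_mono) auto
  moreover have "real q ^ d = s ^ d * s ^ d" using s(2) by (metis power_mult_distrib)
  moreover have "real q * real (card S) = real (q ^ d) + Re ?E"
    using arg_cong[OF card_sphere_gauss_expansion, of Re] by simp
  moreover have "- cmod ?E \<le> Re ?E" using abs_Re_le_cmod[of ?E] by linarith
  moreover have "cmod ?E \<le> s ^ d * (s + 1)" using norm_sphere_error_le by (simp add: s_def)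
  ultimately have "real q ^ d \<le> 20 * (real q * real (card S))" by simp
  moreover have "real q ^ d = real q * real q ^ (d - 1)" using dim by (simp add: power_eq_if)
  ultimately show ?thesis using q_ge_3 by (simp add: mult.left_commute)
qed

lemma line_direction_exists:
  assumes z: "z \<in> V" "z \<noteq> vzero"
  obtains w p r where "w \<in> V" "p < d" "w p \<noteq> \<zero>" "r < d" "r \<noteq> p" "matvec z r \<noteq> \<zero>"
    "dot w (matvec z) = \<zero>" "\<And>y. y \<in> V \<Longrightarrow> Q w = \<zero> \<Longrightarrow> dot y (matvec w) = \<zero> \<Longrightarrow> Q y \<noteq> j"
proof -
  obtain i where i: "i < d" "matvec z i \<noteq> \<zero>"
    using vec_nonzero_component[of "matvec z"] z matvec_eq_vzero_iff by auto
  show ?thesis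
  proof (cases "3 \<le> d")
    case True
    then obtain w p where "w \<in> V" "p < d" "p \<noteq> i" "w p \<noteq> \<zero>" "dot w (matvec z) = \<zero>" "Q w \<noteq> \<zero>"
      using anisotropic_perp_direction z(1) i by blast
    then show ?thesis using i by (intro that[of w p i]) auto
  next
    case False
    then have d: "d = 2" using dim by simp
    let ?m = "1 - i"
    let ?w = "perp_vec (matvec z) i ?m"
    have m: "?m < d" "?m \<noteq> i" using d i(1) by arith+
    have w: "?w \<in> V" "?w ?m = matvec z i" "dot ?w (matvec z) = \<zero>"
      using z m i by (simp_all add: perp_vec_apply dot_perp_vec_self)
    have "?w \<noteq> vzero" using w i m by auto
    have no_line: "Q y \<noteq> j" if "y \<in> V" "Q ?w = \<zero>" "dot y (matvec ?w) = \<zero>" for y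
      using isotropic_orthogonal_dim2[OF d w(1) \<open>?w \<noteq> vzero\<close> that(2,1,3)] j_nonzero by simp
    show ?thesis using w m i no_line by (intro that[of ?w ?m i]) auto
  qed
qed

lemma card_line_sphere_le:
  assumes y: "y \<in> V" and w: "w \<in> V" and not_contained: "\<not> (Q w = \<zero> \<and> dot y (matvec w) = \<zero> \<and> Q y = j)"
  shows "card {s \<in> carrier R. Q (vadd y (vscale s w)) = j} \<le> 2"
proof -
  define D where "D = dot y (matvec w)"
  have closed: "D \<in> carrier R" "Q w \<in> carrier R" "Q y \<in> carrier R" using y w by (simp_all add: D_def)
  have expand: "Q (vadd y (vscale s w)) \<ominus> j = Q w \<otimes> s \<otimes> s \<oplus> ((\<one> \<oplus> \<one>) \<otimes> D) \<otimes> s \<oplus> (Q y \<ominus> j)"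
    if s: "s \<in> carrier R" for s
  proof -
    have "Q (vadd y (vscale s w)) \<ominus> j = Q y \<oplus> s \<otimes> s \<otimes> Q w \<oplus> (\<one> \<oplus> \<one>) \<otimes> (s \<otimes> D) \<ominus> j"
      using y w s by (simp add: quad_form_vadd quad_form_vscale matvec_vscale dot_vscale_right D_def)
    also have "\<dots> = Q w \<otimes> s \<otimes> s \<oplus> ((\<one> \<oplus> \<one>) \<otimes> D) \<otimes> s \<oplus> (Q y \<ominus> j)"
      using s closed j_closed by algebra
    finally show ?thesis .
  qed
  have "{s \<in> carrier R. Q (vadd y (vscale s w)) = j}
      = {s \<in> carrier R. Q w \<otimes> s \<otimes> s \<oplus> ((\<one> \<oplus> \<one>) \<otimes> D) \<otimes> s \<oplus> (Q y \<ominus> j) = \<zero>}"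
  proof (intro Collect_cong conj_cong refl)
    fix s assume "s \<in> carrier R"
    then show "Q (vadd y (vscale s w)) = j
        \<longleftrightarrow> Q w \<otimes> s \<otimes> s \<oplus> ((\<one> \<oplus> \<one>) \<otimes> D) \<otimes> s \<oplus> (Q y \<ominus> j) = \<zero>"
      using expand[of s] y w j_closed r_right_minus_eq[of "Q (vadd y (vscale s w))" j] by simp
  qed
  also have "card \<dots> \<le> 2"
    using not_contained closed j_closed two_nonzero by (intro card_quadratic_roots_le_2) (auto simp: integral_iff D_def)
  finally show ?thesis .
qed

(* Projecting along w onto the slice {y p = 0} of the hyperplane, each fibre lies on a line
   y + t w, which by no_line is not contained in the sphere. *)
lemma card_sphere_hyperplane_le:
  assumes c: "c \<in> V" and k: "k \<in> carrier R" and w: "w \<in> V" "p < d" "w p \<noteq> \<zero>"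
    and r: "r < d" "r \<noteq> p" "c r \<noteq> \<zero>" and wc: "dot w c = \<zero>"
    and no_line: "\<And>y. y \<in> V \<Longrightarrow> Q w = \<zero> \<Longrightarrow> dot y (matvec w) = \<zero> \<Longrightarrow> Q y \<noteq> j"
  shows "card {x \<in> V. Q x = j \<and> dot x c = k} \<le> 2 * q ^ (d - 2)"
proof -
  let ?T = "{x \<in> V. Q x = j \<and> dot x c = k}"
  let ?P = "{y \<in> V. y p = \<zero> \<and> dot y c = k}"
  note inv_w = nonzero_inverse[OF vec_closed[OF w(1,2)] w(3)]
  define t where "t x = x p \<otimes> inv (w p)" for x
  define proj where "proj x = vadd x (vscale (\<ominus> t x) w)" for x
  have t: "t x \<in> carrier R" if "x \<in> V" for x using that w inv_w by (simp add: t_def)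
  have x_eq: "vadd (proj x) (vscale (t x) w) = x" if "x \<in> V" for x
    using that w t[OF that] by (intro vec_eqI) (simp_all add: proj_def a_assoc l_minus l_neg)
  have proj: "proj x \<in> ?P" if x: "x \<in> ?T" for x
  proof -
    have "proj x p = x p \<oplus> \<ominus> (x p \<otimes> (inv (w p) \<otimes> w p))"
      using x w inv_w by (simp add: proj_def t_def m_assoc l_minus)
    moreover have "dot (proj x) c = dot x c \<oplus> \<ominus> t x \<otimes> dot w c"
      using x c w t by (simp add: proj_def dot_vadd_left dot_vscale_left)
    ultimately show ?thesis using x inv_w wc k w t by (simp add: proj_def r_neg)
  qed
  have fibre: "card {x \<in> ?T. proj x = y} \<le> 2" if y: "y \<in> ?P" for y
  proof -
    let ?line = "{s \<in> carrier R. Q (vadd y (vscale s w)) = j}"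
    have "{x \<in> ?T. proj x = y} \<subseteq> (\<lambda>s. vadd y (vscale s w)) ` ?line"
    proof
      fix x assume x: "x \<in> {x \<in> ?T. proj x = y}"
      then have line: "vadd y (vscale (t x) w) = x" "t x \<in> carrier R" using x_eq[of x] t[of x] by simp_all
      then show "x \<in> (\<lambda>s. vadd y (vscale s w)) ` ?line" using x by (intro rev_image_eqI[of "t x"]) auto
    qed
    then have "card {x \<in> ?T. proj x = y} \<le> card ((\<lambda>s. vadd y (vscale s w)) ` ?line)"
      using finite_carrier by (intro card_mono) auto
    also have "\<dots> \<le> card ?line" using finite_carrier by (intro card_image_le) simp
    also have "\<dots> \<le> 2" using no_line[of y] y w by (intro card_line_sphere_le) auto
    finally show ?thesis .
  qed
  have "?T \<subseteq> (\<Union>y\<in>?P. {x \<in> ?T. proj x = y})" using proj by blast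
  then have "card ?T \<le> card (\<Union>y\<in>?P. {x \<in> ?T. proj x = y})"
    using finite_vecs by (intro card_mono) auto
  also have "\<dots> \<le> (\<Sum>y\<in>?P. card {x \<in> ?T. proj x = y})"
    using finite_vecs by (intro card_UN_le) auto
  also have "\<dots> \<le> (\<Sum>y\<in>?P. 2)" using fibre by (intro sum_mono) auto
  also have "\<dots> = 2 * card ?P" by simp
  also have "\<dots> \<le> 2 * q ^ (d - 2)" using card_hyperplane_slice_le[OF c w(2) r] by simp
  finally show ?thesis .
qed

(* Both x and z - x on the sphere forces x . Az = Q(z) / 2, a hyperplane. *)
lemma card_sphere_translate_le:
  assumes z: "z \<in> V" "z \<noteq> vzero"
  shows "card {x \<in> S. vadd z (vneg x) \<in> S} \<le> 2 * q ^ (d - 2)"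
proof -
  let ?c = "matvec z"
  note inv_2 = nonzero_inverse[OF _ two_nonzero, simplified]
  define k where "k = inv (\<one> \<oplus> \<one>) \<otimes> Q z"
  have k: "k \<in> carrier R" using inv_2 z by (simp add: k_def)
  have sub: "{x \<in> S. vadd z (vneg x) \<in> S} \<subseteq> {x \<in> V. Q x = j \<and> dot x ?c = k}"
  proof
    fix x assume "x \<in> {x \<in> S. vadd z (vneg x) \<in> S}"
    then have x: "x \<in> V" "Q x = j" "Q (vadd z (vneg x)) = j" by (auto simp: sphere_iff)
    have "Q (vadd z (vneg x)) = Q z \<oplus> Q x \<oplus> (\<one> \<oplus> \<one>) \<otimes> \<ominus> dot x ?c"
      using z x by (simp add: quad_form_vadd quad_form_vneg matvec_vneg dot_vneg_right dot_matvec_sym[of z x])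
    then have e: "Q z \<oplus> j \<oplus> (\<one> \<oplus> \<one>) \<otimes> \<ominus> dot x ?c = j" using x by simp
    have closed: "Q z \<in> carrier R" "dot x ?c \<in> carrier R" using x z by simp_all
    have "Q z \<ominus> (\<one> \<oplus> \<one>) \<otimes> dot x ?c = (Q z \<oplus> j \<oplus> (\<one> \<oplus> \<one>) \<otimes> \<ominus> dot x ?c) \<ominus> j"
      using closed j_closed by algebra
    also have "\<dots> = \<zero>" using e j_closed by simp
    finally have "Q z = (\<one> \<oplus> \<one>) \<otimes> dot x ?c" using x z by simp
    then have "k = dot x ?c" using inv_2 x z by (simp add: k_def m_assoc[symmetric])
    then show "x \<in> {x \<in> V. Q x = j \<and> dot x ?c = k}" using x by simp
  qed
  obtain w p r where "w \<in> V" "p < d" "w p \<noteq> \<zero>" "r < d" "r \<noteq> p" "?c r \<noteq> \<zero>" "dot w ?c = \<zero>"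
    "\<And>y. y \<in> V \<Longrightarrow> Q w = \<zero> \<Longrightarrow> dot y (matvec w) = \<zero> \<Longrightarrow> Q y \<noteq> j"
    using line_direction_exists[OF z] by blast
  then have "card {x \<in> V. Q x = j \<and> dot x ?c = k} \<le> 2 * q ^ (d - 2)"
    using z k by (intro card_sphere_hyperplane_le) auto
  moreover have "card {x \<in> S. vadd z (vneg x) \<in> S} \<le> card {x \<in> V. Q x = j \<and> dot x ?c = k}"
    using sub finite_vecs by (intro card_mono) auto
  ultimately show ?thesis by linarith
qed

lemma card_sum_fibre_le:
  assumes a: "a \<in> V" "a \<noteq> vzero"
  shows "card {p \<in> S \<times> S. vadd (fst p) (snd p) = a} \<le> 2 * q ^ (d - 2)"
proof -
  have snd_eq: "snd p = vadd a (vneg (fst p))" if "p \<in> {p \<in> S \<times> S. vadd (fst p) (snd p) = a}" for p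
  proof -
    have "fst p \<in> V" "snd p \<in> V" using that sphere_subset by (auto simp: mem_Times_iff)
    then show ?thesis using that a(1) vadd_eq_iff[of "fst p" "snd p" a] by simp
  qed
  have "inj_on fst {p \<in> S \<times> S. vadd (fst p) (snd p) = a}"
  proof (rule inj_onI)
    fix p p' assume "p \<in> {p \<in> S \<times> S. vadd (fst p) (snd p) = a}" "p' \<in> {p \<in> S \<times> S. vadd (fst p) (snd p) = a}"
      and "fst p = fst p'"
    then show "p = p'" using snd_eq[of p] snd_eq[of p'] by (simp add: prod_eq_iff)
  qed
  moreover have "fst ` {p \<in> S \<times> S. vadd (fst p) (snd p) = a} \<subseteq> {x \<in> S. vadd a (vneg x) \<in> S}"
  proof (rule image_subsetI)
    fix p assume p: "p \<in> {p \<in> S \<times> S. vadd (fst p) (snd p) = a}"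
    then have "fst p \<in> S" "snd p \<in> S" by (simp_all add: mem_Times_iff)
    then show "fst p \<in> {x \<in> S. vadd a (vneg x) \<in> S}" using snd_eq[OF p] by simp
  qed
  ultimately have "card {p \<in> S \<times> S. vadd (fst p) (snd p) = a} \<le> card {x \<in> S. vadd a (vneg x) \<in> S}"
    using finite_sphere by (intro card_inj_on_le) auto
  also have "\<dots> \<le> 2 * q ^ (d - 2)" using card_sphere_translate_le[OF a] .
  finally show ?thesis .
qed

subsection \<open>The extension estimate\<close>

definition extension_sum where "extension_sum f m = (\<Sum>x\<in>S. \<chi> (\<ominus> dot x m) * f x)"

lemma extension_sum_square:
  assumes m: "m \<in> V"
  shows "(extension_sum f m)\<^sup>2
    = (\<Sum>p\<in>S \<times> S. \<chi> (\<ominus> dot (vadd (fst p) (snd p)) m) * (f (fst p) * f (snd p)))"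
proof -
  have "\<chi> (\<ominus> dot (vadd x y) m) = \<chi> (\<ominus> dot x m) * \<chi> (\<ominus> dot y m)" if "x \<in> S" "y \<in> S" for x y
  proof -
    have "x \<in> V" "y \<in> V" using that sphere_subset by auto
    then show ?thesis using m by (simp add: dot_vadd_left minus_add chi_add)
  qed
  then show ?thesis
    by (simp add: extension_sum_def power2_eq_square sum_product sum.cartesian_product case_prod_beta)
      (intro sum.cong refl, auto simp: mult_ac)
qed

lemma sum_antipodal_le:
  "(\<Sum>p\<in>S \<times> S. if vadd (fst p) (snd p) = vzero then cmod (f (fst p) * f (snd p)) else 0)
    \<le> (\<Sum>x\<in>S. (cmod (f x))\<^sup>2)"
proof -
  have vneg_sphere: "vneg x \<in> S" if "x \<in> S" for x
    using that by (simp add: sphere_iff quad_form_vneg)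
  have "(\<Sum>p\<in>S \<times> S. if vadd (fst p) (snd p) = vzero then cmod (f (fst p) * f (snd p)) else 0)
      = (\<Sum>x\<in>S. \<Sum>y\<in>S. if vadd x y = vzero then cmod (f x) * cmod (f y) else 0)"
    by (simp add: sum.cartesian_product case_prod_beta) (intro sum.cong refl, simp add: norm_mult)
  also have "\<dots> = (\<Sum>x\<in>S. \<Sum>y\<in>S. if y = vneg x then cmod (f x) * cmod (f y) else 0)"
  proof -
    have "vadd x y = vzero \<longleftrightarrow> y = vneg x" if "x \<in> S" "y \<in> S" for x y
      using that sphere_subset vadd_eq_vzero_iff by blast
    then show ?thesis by (intro sum.cong refl) simp
  qed
  also have "\<dots> = (\<Sum>x\<in>S. cmod (f x) * cmod (f (vneg x)))"
    using finite_sphere vneg_sphere by (simp add: sum.delta')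
  also have "\<dots> \<le> (\<Sum>x\<in>S. ((cmod (f x))\<^sup>2 + (cmod (f (vneg x)))\<^sup>2) / 2)"
  proof (rule sum_mono)
    fix x
    show "cmod (f x) * cmod (f (vneg x)) \<le> ((cmod (f x))\<^sup>2 + (cmod (f (vneg x)))\<^sup>2) / 2"
      using sum_squares_bound[of "cmod (f x)" "cmod (f (vneg x))"] by simp
  qed
  also have "(\<Sum>x\<in>S. (cmod (f (vneg x)))\<^sup>2) = (\<Sum>x\<in>S. (cmod (f x))\<^sup>2)"
    by (rule sum.reindex_bij_witness[where i=vneg and j=vneg])
      (use vneg_sphere sphere_subset in \<open>auto simp: subset_iff\<close>)
  then have "(\<Sum>x\<in>S. ((cmod (f x))\<^sup>2 + (cmod (f (vneg x)))\<^sup>2) / 2) = (\<Sum>x\<in>S. (cmod (f x))\<^sup>2)"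
    by (simp add: sum.distrib sum_divide_distrib[symmetric])
  finally show ?thesis .
qed

lemma weighted_additive_energy_le:
  fixes f :: "(nat \<Rightarrow> nat) \<Rightarrow> complex" and a :: "(nat \<Rightarrow> nat) \<times> (nat \<Rightarrow> nat) \<Rightarrow> real"
  defines "a \<equiv> \<lambda>p. cmod (f (fst p) * f (snd p))"
  shows "(\<Sum>p\<in>S \<times> S. \<Sum>p'\<in>S \<times> S. if vadd (fst p) (snd p) = vadd (fst p') (snd p') then a p * a p' else 0)
     \<le> (1 + 2 * real q ^ (d - 2)) * (\<Sum>x\<in>S. (cmod (f x))\<^sup>2)\<^sup>2"
proof -
  let ?P = "S \<times> S"
  let ?sv = "\<lambda>p. vadd (fst p) (snd p)"
  let ?zero = "\<Sum>p\<in>?P. if ?sv p = vzero then a p else 0"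
  let ?T = "\<Sum>x\<in>S. (cmod (f x))\<^sup>2"
  define M where "M = 2 * real q ^ (d - 2)"
  have sv: "?sv p \<in> V" if "p \<in> ?P" for p using that sphere_subset by (auto simp: mem_Times_iff subset_iff)
  have split: "(if ?sv p = ?sv p' then a p * a p' else 0)
      = (if ?sv p = vzero then a p else 0) * (if ?sv p' = vzero then a p' else 0)
        + (if ?sv p = ?sv p' \<and> ?sv p \<noteq> vzero then a p * a p' else 0)" for p p'
    by auto
  have "(\<Sum>p\<in>?P. \<Sum>p'\<in>?P. if ?sv p = ?sv p' then a p * a p' else 0)
      = ?zero\<^sup>2 + (\<Sum>p\<in>?P. \<Sum>p'\<in>?P. if ?sv p = ?sv p' \<and> ?sv p \<noteq> vzero then a p * a p' else 0)"
    by (simp only: split sum.distrib power2_eq_square sum_product)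
  also have "\<dots> \<le> ?T\<^sup>2 + M * (\<Sum>p\<in>?P. (a p)\<^sup>2)"
  proof (intro add_mono power_mono sum_pairs_le_by_row_count)
    show "?zero \<le> ?T" unfolding a_def by (rule sum_antipodal_le)
  next
    fix p assume p: "p \<in> ?P"
    show "real (card {p' \<in> ?P. ?sv p = ?sv p' \<and> ?sv p \<noteq> vzero}) \<le> M"
    proof (cases "?sv p = vzero")
      case False
      then have "card {p' \<in> ?P. ?sv p = ?sv p' \<and> ?sv p \<noteq> vzero} \<le> 2 * q ^ (d - 2)"
        using card_sum_fibre_le[OF sv[OF p]] by (simp add: eq_commute[of "?sv p"])
      then show ?thesis using of_nat_mono by (fastforce simp: M_def)
    qed (simp add: M_def)
  qed (auto simp: a_def finite_sphere intro: sum_nonneg)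
  also have "(\<Sum>p\<in>?P. (a p)\<^sup>2) = ?T\<^sup>2"
    by (simp add: a_def power2_eq_square sum_product sum.cartesian_product norm_mult case_prod_beta mult_ac)
  finally show ?thesis by (simp add: M_def algebra_simps)
qed

(* By Parseval the fourth moment of the extension sum is q^d times the weighted additive energy of S. *)
lemma sum_extension_sum_pow4_le:
  "(\<Sum>m\<in>V. (cmod (extension_sum f m))^4)
     \<le> real (q ^ d) * (1 + 2 * real q ^ (d - 2)) * (\<Sum>x\<in>S. (cmod (f x))\<^sup>2)\<^sup>2"
proof -
  let ?P = "S \<times> S"
  let ?sv = "\<lambda>p. vadd (fst p) (snd p)"
  let ?h = "\<lambda>p. f (fst p) * f (snd p)"
  have sv: "?sv p \<in> V" if "p \<in> ?P" for p using that sphere_subset by (auto simp: mem_Times_iff subset_iff)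
  have Re_le: "Re (if ?sv p = ?sv p' then ?h p * cnj (?h p') else 0)
      \<le> (if ?sv p = ?sv p' then cmod (?h p) * cmod (?h p') else 0)" for p p'
    using complex_Re_le_cmod[of "?h p * cnj (?h p')"]
    by (simp add: norm_mult del: norm_mult_numeral1 norm_mult_numeral2)
  have "(\<Sum>m\<in>V. (cmod (extension_sum f m))^4) = (\<Sum>m\<in>V. (cmod (\<Sum>p\<in>?P. \<chi> (\<ominus> dot (?sv p) m) * ?h p))\<^sup>2)"
    by (intro sum.cong refl)
      (simp add: extension_sum_square[symmetric] norm_power power_mult[symmetric])
  also have "\<dots> = real (q ^ d) * Re (\<Sum>p\<in>?P. \<Sum>p'\<in>?P. if ?sv p = ?sv p' then ?h p * cnj (?h p') else 0)"
    using finite_sphere sv by (intro parseval_exp_sum) auto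
  also have "\<dots> \<le> real (q ^ d) * (\<Sum>p\<in>?P. \<Sum>p'\<in>?P. if ?sv p = ?sv p' then cmod (?h p) * cmod (?h p') else 0)"
    unfolding Re_sum by (intro mult_left_mono sum_mono Re_le) simp
  also have "\<dots> \<le> real (q ^ d) * ((1 + 2 * real q ^ (d - 2)) * (\<Sum>x\<in>S. (cmod (f x))\<^sup>2)\<^sup>2)"
    using weighted_additive_energy_le[of f] by (intro mult_left_mono) simp_all
  finally show ?thesis by (simp add: mult.assoc)
qed

lemma fourth_moment_factor_le: "real (q ^ d) * (1 + 2 * real q ^ (d - 2)) \<le> 1200 * (real (card S))\<^sup>2"
proof -
  have q: "real q \<ge> 3" using q_ge_3 by simp
  have "real (q ^ d) * (1 + 2 * real q ^ (d - 2)) \<le> 3 * real q ^ (2 * d - 2)"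
  proof -
    have "real q ^ d \<le> real q ^ (2 * d - 2)" using q dim by (intro power_increasing) auto
    moreover have "d + (d - 2) = 2 * d - 2" using dim by arith
    then have "real q ^ d * real q ^ (d - 2) = real q ^ (2 * d - 2)" by (simp only: power_add[symmetric])
    ultimately show ?thesis by (simp add: algebra_simps)
  qed
  also have "real q ^ (2 * d - 2) \<le> 400 * (real (card S))\<^sup>2"
  proof -
    have "2 * d - 2 = (d - 1) * 2" using dim by arith
    then have "real q ^ (2 * d - 2) = (real q ^ (d - 1))\<^sup>2" by (simp only: power_mult)
    also have "\<dots> \<le> (20 * real (card S))\<^sup>2" using card_sphere_lower_bound q by (intro power_mono) auto
    finally show ?thesis by (simp add: power_mult_distrib)
  qed
  finally show ?thesis by simp
qed

lemma extension_L2_L4_bound: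
  "norm_dm R d 4 (ext_op R d \<chi> S f) \<le> 6 * norm_dsigma S 2 f"
proof -
  define s where "s = real (card S)"
  define T where "T = (\<Sum>x\<in>S. (cmod (f x))\<^sup>2)"
  define Y where "Y = 6 * sqrt (T / s)"
  have T: "T \<ge> 0" by (simp add: T_def sum_nonneg)
  have "0 < real q ^ (d - 1)" using q_ge_3 by simp
  then have s: "s > 0" using card_sphere_lower_bound unfolding s_def by linarith
  have "(\<Sum>m\<in>V. cmod (ext_op R d \<chi> S f m) powr 4) = (\<Sum>m\<in>V. (cmod (extension_sum f m))^4) / s^4"
  proof -
    have "cmod (ext_op R d \<chi> S f m) = cmod (extension_sum f m) / s" for m
      by (simp add: ext_op_def extension_sum_def s_def norm_mult norm_divide)
    then show ?thesis using s by (simp add: power_divide sum_divide_distrib)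
  qed
  also have "\<dots> \<le> real (q ^ d) * (1 + 2 * real q ^ (d - 2)) * T\<^sup>2 / s^4"
    using sum_extension_sum_pow4_le[of f] s unfolding T_def by (intro divide_right_mono) auto
  also have "\<dots> \<le> 1200 * s\<^sup>2 * T\<^sup>2 / s^4"
    using fourth_moment_factor_le s by (intro divide_right_mono mult_right_mono) (auto simp: s_def)
  also have "\<dots> \<le> Y ^ 4"
  proof -
    have "Y ^ 4 = 1296 * (sqrt (T / s) ^ 2)\<^sup>2" by (simp add: Y_def power_mult_distrib power_mult[symmetric])
    then have "Y ^ 4 = 1296 * (T / s)\<^sup>2" using s T by simp
    moreover have "1200 * s\<^sup>2 * T\<^sup>2 / s ^ 4 = 1200 * (T / s)\<^sup>2"
      using s by (simp add: power_divide power2_eq_square power4_eq_xxxx)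
    ultimately show ?thesis by simp
  qed
  finally have "norm_dm R d 4 (ext_op R d \<chi> S f) \<le> Y"
    unfolding norm_dm_def using s T by (intro powr_quarter_le sum_nonneg) (auto simp: Y_def)
  also have "Y = 6 * norm_dsigma S 2 f"
    using s T by (simp add: Y_def norm_dsigma_def T_def s_def powr_half_sqrt)
  finally show ?thesis .
qed

lemma R_star_2_4_le: "R_star R d \<chi> S 2 4 \<le> 6"
  unfolding R_star_def
  by (rule cInf_lower) (auto simp: extension_L2_L4_bound intro: bdd_belowI[where m=0])

end

theorem theorem1p2:
  fixes d :: nat
  assumes "d \<ge> 2"
  shows "\<exists>C::real. \<forall>(R::nat ring) (\<chi>::nat \<Rightarrow> complex) (a::nat \<Rightarrow> nat \<Rightarrow> nat) (j::nat).
     field R \<longrightarrow> finite (carrier R) \<longrightarrow> \<one>\<^bsub>R\<^esub> \<oplus>\<^bsub>R\<^esub> \<one>\<^bsub>R\<^esub> \<noteq> \<zero>\<^bsub>R\<^esub> \<longrightarrow>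
     nontriv_add_char R \<chi> \<longrightarrow> sym_coeffs R d a \<longrightarrow> mat_invertible R d a \<longrightarrow>
     j \<in> carrier R \<longrightarrow> j \<noteq> \<zero>\<^bsub>R\<^esub> \<longrightarrow>
     R_star R d \<chi> (sphere_set R d a j) 2 4 \<le> C"
proof (intro exI[of _ 6] allI impI)
  fix R :: "nat ring" and \<chi> :: "nat \<Rightarrow> complex" and a :: "nat \<Rightarrow> nat \<Rightarrow> nat" and j :: nat
  assume "field R" "finite (carrier R)" "\<one>\<^bsub>R\<^esub> \<oplus>\<^bsub>R\<^esub> \<one>\<^bsub>R\<^esub> \<noteq> \<zero>\<^bsub>R\<^esub>"
    "nontriv_add_char R \<chi>" "sym_coeffs R d a" "mat_invertible R d a" "j \<in> carrier R" "j \<noteq> \<zero>\<^bsub>R\<^esub>"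
  then interpret fq_sphere R \<chi> d a j
    using assms by (simp add: fq_sphere_def fq_sphere_axioms_def fq_quadric_def fq_quadric_axioms_def
        fq_space_def fq_char_def fq_char_axioms_def)
  show "R_star R d \<chi> (sphere_set R d a j) 2 4 \<le> 6" by (rule R_star_2_4_le)
qed

end
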